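(* Let $k\in\mathbb{N}$, $k>2$, let $\mathcal{O}$ be an oval with support function $h$, let $\mathcal{P}_k$ be its $k$th Order Preserving Set and $D_{\mathcal{O}}$ its Steiner disk. Then \[ L_{\mathcal{O}}^2-4\pi A_{\mathcal{O}}-4\pi|A_{\mathcal{P}_k}|\geqslant 6\pi\, d_2^2(\mathcal{O},\mathcal{P}_k+D_{\mathcal{O}}), \] where $L_{\mathcal{O}}$ is the length of $\mathcal{O}$ and $A_{\mathcal{O}}$ the area it bounds.
   Context: An oval is a simple, closed, regular, smooth planar curve with nowhere vanishing curvature. Write $u(s)=(\cos s,\sin s)$, $u'(s)=(-\sin s,\cos s)$. The support function of $\mathcal{O}$ is $h(s)=\sup_{x\in\mathcal{O}}\langle x,u(s)\rangle=a_0+\sum_{n\geqslant1}(a_n\cos(ns)+b_n\sin(ns))$, and $\mathcal{O}(s)=h(s)u(s)+h'(s)u'(s)$. The average width is $\overline{w}=\frac1\pi\int_0^{2\pi}h=2a_0$; the Steiner point is $(a_1,b_1)=\frac1\pi\int_0^{2\pi}h(s)u(s)\,ds$. The Steiner disk $D_{\mathcal{O}}$ is the disk centered at the Steiner point of radius $\frac12|\overline{w}|$; its support function is $a_0+a_1\cos s+b_1\sin s$. The $k$th Order Preserving Set $\mathcal{P}_k$ is the curve $\mathcal{P}_k(s)=h_k(s)u(s)+h_k'(s)u'(s)$ with support function $h_k(s)=\frac1k\sum_{j=0}^{k-1}h(s+\tfrac{2\pi j}{k})-\frac12\overline{w}$ (equivalently $\mathcal{P}_k(s)=\frac{1}{k}\sum_{j=1}^{k}\big(\cos(\tfrac{2\pi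 j}{k})\mathcal{O}(s+\tfrac{2\pi j}{k})-\sin(\tfrac{2\pi j}{k})\mathcal{O}(s+\tfrac{2\pi j}{k})^{\perp}\big)-\frac12\overline{w}u(s)$ with $(x,y)^\perp=(-y,x)$). Its oriented area is $A_{\mathcal{P}_k}=\frac12\int_0^{2\pi}(h_k^2-h_k'^2)\,ds$. The Minkowski sum $\mathcal{P}_k+D_{\mathcal{O}}$ is the convex body with support function $h_k+a_0+a_1\cos s+b_1\sin s$. For two bodies with support functions $h_1,h_2$, $d_2=\left(\int_0^{2\pi}|h_1(s)-h_2(s)|^2ds\right)^{1/2}$. *)

theory Defs
  imports "HOL-Analysis.Analysis"
begin

definition uvec :: "real \<Rightarrow> real \<times> real" where
  "uvec s = (cos s, sin s)"

definition uvec' :: "real \<Rightarrow> real \<times> real" where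
  "uvec' s = (- sin s, cos s)"

text \<open>Hypotheses on a support function \<open>h\<close> of an oval: smooth (all derivatives exist),
  \<open>2\<pi>\<close>-periodic, and radius of curvature \<open>h + h''\<close> nowhere vanishing (positive).\<close>
definition oval_support :: "(real \<Rightarrow> real) \<Rightarrow> bool" where
  "oval_support h \<longleftrightarrow>
     (\<forall>n s. ((deriv ^^ n) h) differentiable (at s)) \<and>
     (\<forall>s. h (s + 2 * pi) = h s) \<and>
     (\<forall>s. h s + deriv (deriv h) s > 0)"

definition oval_curve :: "(real \<Rightarrow> real) \<Rightarrow> real \<Rightarrow> real \<times> real" where
  "oval_curve h s = h s *\<^sub>R uvec s + deriv h s *\<^sub>R uvec' s"

definition oval_length :: "(real \<Rightarrow> real) \<Rightarrow> real" where
  "oval_length h = integral {0..2*pi} (\<lambda>s. norm (vector_derivative (oval_curve h) (at s)))"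

definition oval_area :: "(real \<Rightarrow> real) \<Rightarrow> real" where
  "oval_area h = measure lebesgue (inside (oval_curve h ` {0..2*pi}))"

definition avg_width :: "(real \<Rightarrow> real) \<Rightarrow> real" where
  "avg_width h = (1 / pi) * integral {0..2*pi} h"

definition steiner_a1 :: "(real \<Rightarrow> real) \<Rightarrow> real" where
  "steiner_a1 h = (1 / pi) * integral {0..2*pi} (\<lambda>s. h s * cos s)"

definition steiner_b1 :: "(real \<Rightarrow> real) \<Rightarrow> real" where
  "steiner_b1 h = (1 / pi) * integral {0..2*pi} (\<lambda>s. h s * sin s)"

definition steiner_disk_support :: "(real \<Rightarrow> real) \<Rightarrow> real \<Rightarrow> real" where
  "steiner_disk_support h s = avg_width h / 2 + steiner_a1 h * cos s + steiner_b1 h * sin s"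

definition ops_support :: "nat \<Rightarrow> (real \<Rightarrow> real) \<Rightarrow> real \<Rightarrow> real" where
  "ops_support k h s = (1 / real k) * (\<Sum>j<k. h (s + 2 * pi * real j / real k)) - avg_width h / 2"

definition ops_area :: "nat \<Rightarrow> (real \<Rightarrow> real) \<Rightarrow> real" where
  "ops_area k h = (1/2) * integral {0..2*pi}
      (\<lambda>s. (ops_support k h s)\<^sup>2 - (deriv (ops_support k h) s)\<^sup>2)"

definition d2 :: "(real \<Rightarrow> real) \<Rightarrow> (real \<Rightarrow> real) \<Rightarrow> real" where
  "d2 h1 h2 = sqrt (integral {0..2*pi} (\<lambda>s. \<bar>h1 s - h2 s\<bar>\<^sup>2))"

end

theory Submission
  imports Defs
begin

text \<open>Split the support function as \<open>h = D + q + g\<close>: \<open>D\<close>, the support function of the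
  Steiner disk, carries the Fourier modes \<open>0\<close> and \<open>1\<close> of \<open>h\<close>; \<open>q = h\<^sub>k\<close> is the average of
  \<open>h\<close> over the rotations by multiples of \<open>2\<pi>/k\<close> minus its mean, which has neither mode; \<open>g\<close> is
  the rest. The three pieces are mutually orthogonal in \<open>L\<^sup>2(0, 2\<pi>)\<close>, and so are their
  derivatives. The length is \<open>\<integral>h = \<pi> w\<close>; coning the inside of the oval from a boundary point
  and using the support property gives \<open>A \<le> (\<parallel>h\<parallel>\<^sup>2 - \<parallel>h'\<parallel>\<^sup>2) / 2\<close>, while
  \<open>A\<^sub>P\<^sub>k = (\<parallel>q\<parallel>\<^sup>2 - \<parallel>q'\<parallel>\<^sup>2) / 2 \<le> 0\<close>. Expanding both with the orthogonal decomposition leaves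
  \<open>L\<^sup>2 - 4\<pi>A - 4\<pi>\<bar>A\<^sub>P\<^sub>k\<bar> \<ge> 2\<pi>(\<parallel>g'\<parallel>\<^sup>2 - \<parallel>g\<parallel>\<^sup>2)\<close>, and Wirtinger's inequality
  \<open>\<parallel>g'\<parallel>\<^sup>2 \<ge> 4\<parallel>g\<parallel>\<^sup>2\<close> for functions without the modes \<open>0\<close> and \<open>1\<close> bounds this by
  \<open>6\<pi>\<parallel>g\<parallel>\<^sup>2 = 6\<pi> d\<^sub>2\<^sup>2\<close>.\<close>

section \<open>Periodic functions and the \<open>L\<^sup>2\<close> inner product\<close>

definition periodic :: "(real \<Rightarrow> 'a) \<Rightarrow> bool" where
  "periodic f \<longleftrightarrow> (\<forall>x. f (x + 2 * pi) = f x)"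

lemma periodic_add_int_multiple:
  assumes "periodic f"
  shows "f (x + 2 * pi * of_int m) = f x"
proof -
  have nat: "f (y + 2 * pi * real n) = f y" for y n
  proof (induction n)
    case (Suc n)
    have "f (y + 2 * pi * real (Suc n)) = f ((y + 2 * pi * real n) + 2 * pi)"
      by (simp add: algebra_simps)
    with Suc assms show ?case by (simp add: periodic_def)
  qed simp
  show ?thesis
  proof (cases "m \<ge> 0")
    case True
    then show ?thesis using nat[of x "nat m"] by simp
  next
    case False
    then show ?thesis using nat[of "x + 2 * pi * of_int m" "nat (- m)"] by simp
  qed
qed

lemma periodic_deriv:
  assumes f: "periodic f" and diff: "\<And>x. f differentiable at x"
  shows "periodic (deriv f)"
  unfolding periodic_def
proof
  fix x
  have "((\<lambda>x. f (x + 2 * pi)) has_real_derivative deriv f (x + 2 * pi)) (at x)"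
    using diff DERIV_deriv_iff_real_differentiable DERIV_shift by blast
  moreover have "(\<lambda>x. f (x + 2 * pi)) = f"
    using f by (simp add: periodic_def)
  ultimately show "deriv f (x + 2 * pi) = deriv f x"
    using diff DERIV_deriv_iff_real_differentiable DERIV_unique by metis
qed

lemma continuous_on_UNIV_integrable:
  "continuous_on UNIV f \<Longrightarrow> (f :: real \<Rightarrow> real) integrable_on {a..b}"
  by (meson continuous_on_subset integrable_continuous_interval subset_UNIV)

lemma continuous_on_shift:
  "continuous_on UNIV (f :: real \<Rightarrow> real) \<Longrightarrow> continuous_on UNIV (\<lambda>s. f (s + c))"
  by (rule continuous_on_compose2[of UNIV f]) (auto intro!: continuous_intros)

lemma integral_periodic_shift:
  fixes f :: "real \<Rightarrow> real"
  assumes per: "periodic f" and cont: "continuous_on UNIV f"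
  shows "integral {0..2*pi} (\<lambda>s. f (s + c)) = integral {0..2*pi} f"
proof -
  have int: "f integrable_on {a..b}" for a b
    by (rule continuous_on_UNIV_integrable[OF cont])
  have shift: "integral {a..b} (\<lambda>s. f (s + d)) = integral {a + d..b + d} f" for a b d
    using integral_shift_real_ivl[of "a + d" d "b + d" f] by simp
  define m where "m = \<lfloor>c / (2*pi)\<rfloor>"
  define c0 where "c0 = c - 2 * pi * of_int m"
  have "of_int m \<le> c / (2*pi)" "c / (2*pi) < of_int m + 1"
    unfolding m_def by linarith+
  then have c0: "0 \<le> c0" "c0 \<le> 2*pi"
    unfolding c0_def by (auto simp: field_simps)
  have "integral {0..2*pi} (\<lambda>s. f (s + c)) = integral {0..2*pi} (\<lambda>s. f (s + c0))"
    using periodic_add_int_multiple[OF per, of "_ + c0" m] by (simp add: c0_def)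
  also have "\<dots> = integral {c0..2*pi} f + integral {2*pi..2*pi + c0} f"
    using Henstock_Kurzweil_Integration.integral_combine[of c0 "2*pi" "2*pi + c0" f] c0 int by (simp add: shift)
  also have "integral {2*pi..2*pi + c0} f = integral {0..c0} f"
    using shift[of 0 c0 "2*pi"] per by (simp add: periodic_def add.commute)
  also have "integral {c0..2*pi} f + integral {0..c0} f = integral {0..2*pi} f"
    using Henstock_Kurzweil_Integration.integral_combine[of 0 c0 "2*pi" f] c0 int by simp
  finally show ?thesis .
qed

lemma integral_deriv_period_eq_0:
  fixes F F' :: "real \<Rightarrow> real"
  assumes "\<And>s. (F has_real_derivative F' s) (at s)" and "F (2*pi) = F 0"
  shows "integral {0..2*pi} F' = 0"
proof -
  have "(F' has_integral (F (2*pi) - F 0)) {0..2*pi}"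
    by (rule fundamental_theorem_of_calculus)
       (auto simp: has_real_derivative_iff_has_vector_derivative[symmetric]
             intro: has_field_derivative_at_within assms)
  then show ?thesis using assms(2) by (simp add: integral_unique)
qed

definition l2_inner :: "(real \<Rightarrow> real) \<Rightarrow> (real \<Rightarrow> real) \<Rightarrow> real" where
  "l2_inner f g = integral {0..2*pi} (\<lambda>s. f s * g s)"

lemma l2_inner_commute: "l2_inner f g = l2_inner g f"
  unfolding l2_inner_def by (simp add: mult.commute)

lemma l2_inner_add_left:
  "continuous_on UNIV f \<Longrightarrow> continuous_on UNIV g \<Longrightarrow> continuous_on UNIV h \<Longrightarrow>
   l2_inner (\<lambda>s. f s + g s) h = l2_inner f h + l2_inner g h"
  unfolding l2_inner_def distrib_right
  by (intro integral_add continuous_on_UNIV_integrable continuous_intros)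

lemma l2_inner_diff_left:
  "continuous_on UNIV f \<Longrightarrow> continuous_on UNIV g \<Longrightarrow> continuous_on UNIV h \<Longrightarrow>
   l2_inner (\<lambda>s. f s - g s) h = l2_inner f h - l2_inner g h"
  unfolding l2_inner_def left_diff_distrib
  by (intro integral_diff continuous_on_UNIV_integrable continuous_intros)

lemma l2_inner_add_right:
  "continuous_on UNIV f \<Longrightarrow> continuous_on UNIV g \<Longrightarrow> continuous_on UNIV h \<Longrightarrow>
   l2_inner h (\<lambda>s. f s + g s) = l2_inner h f + l2_inner h g"
  by (simp add: l2_inner_commute[of h] l2_inner_add_left)

lemma l2_inner_diff_right:
  "continuous_on UNIV f \<Longrightarrow> continuous_on UNIV g \<Longrightarrow> continuous_on UNIV h \<Longrightarrow>
   l2_inner h (\<lambda>s. f s - g s) = l2_inner h f - l2_inner h g"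
  by (simp add: l2_inner_commute[of h] l2_inner_diff_left)

lemma l2_inner_scale_left: "l2_inner (\<lambda>s. c * f s) g = c * l2_inner f g"
  unfolding l2_inner_def by (simp add: mult.assoc)

lemma l2_inner_scale_right: "l2_inner f (\<lambda>s. c * g s) = c * l2_inner f g"
  unfolding l2_inner_def by (simp add: algebra_simps)

lemma l2_inner_divide_left: "l2_inner (\<lambda>s. f s / c) g = l2_inner f g / c"
  unfolding l2_inner_def by simp

lemma l2_inner_sum_left:
  "finite I \<Longrightarrow> (\<And>i. i \<in> I \<Longrightarrow> continuous_on UNIV (f i)) \<Longrightarrow> continuous_on UNIV g \<Longrightarrow>
   l2_inner (\<lambda>s. \<Sum>i\<in>I. f i s) g = (\<Sum>i\<in>I. l2_inner (f i) g)"
  unfolding l2_inner_def sum_distrib_right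
  by (intro integral_sum continuous_on_UNIV_integrable continuous_intros) auto

lemma l2_inner_self_nonneg: "continuous_on UNIV f \<Longrightarrow> 0 \<le> l2_inner f f"
  unfolding l2_inner_def by (intro integral_nonneg continuous_on_UNIV_integrable continuous_intros) auto

lemma l2_inner_self_le:
  assumes "continuous_on UNIV f" and "\<And>s. \<bar>f s\<bar> \<le> e"
  shows "l2_inner f f \<le> 2 * pi * e\<^sup>2"
proof -
  have "l2_inner f f \<le> integral {0..2*pi} (\<lambda>s. e\<^sup>2)"
    unfolding l2_inner_def
  proof (rule integral_le)
    show "(\<lambda>s. f s * f s) integrable_on {0..2*pi}"
      by (intro continuous_on_UNIV_integrable continuous_intros assms)
    show "f s * f s \<le> e\<^sup>2" for s
      using abs_le_square_iff[of "f s" e] assms(2)[of s] by (simp add: power2_eq_square)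
  qed (rule integrable_const_ivl)
  then show ?thesis by simp
qed

lemma l2_inner_add_self:
  assumes "continuous_on UNIV f" and "continuous_on UNIV g"
  shows "l2_inner (\<lambda>s. f s + g s) (\<lambda>s. f s + g s) = l2_inner f f + 2 * l2_inner f g + l2_inner g g"
  using assms by (simp add: l2_inner_add_left l2_inner_add_right l2_inner_commute[of g f] continuous_intros)

lemma l2_inner_add3_self_orthogonal:
  assumes "continuous_on UNIV f" "continuous_on UNIV g" "continuous_on UNIV h"
    and "l2_inner f g = 0" "l2_inner f h = 0" "l2_inner g h = 0"
  shows "l2_inner (\<lambda>s. f s + g s + h s) (\<lambda>s. f s + g s + h s) = l2_inner f f + l2_inner g g + l2_inner h h"
  using assms
  by (simp add: l2_inner_add_self l2_inner_add_left continuous_intros)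

lemma l2_inner_pythagoras:
  assumes cont: "continuous_on UNIV f" "continuous_on UNIV u" "continuous_on UNIV v"
    and proj: "l2_inner u f = l2_inner u u" "l2_inner v f = l2_inner v v" and orth: "l2_inner u v = 0"
  shows "l2_inner f f = l2_inner u u + l2_inner v v + l2_inner (\<lambda>s. f s - u s - v s) (\<lambda>s. f s - u s - v s)"
proof -
  define r where "r = (\<lambda>s. f s - u s - v s)"
  have cont_r: "continuous_on UNIV r"
    unfolding r_def by (intro continuous_intros cont)
  have "l2_inner w r = l2_inner w f - l2_inner w u - l2_inner w v" if "continuous_on UNIV w" for w
    unfolding r_def using cont that by (simp add: l2_inner_diff_right continuous_intros)
  then have "l2_inner u r = 0" "l2_inner v r = 0"
    using cont proj orth l2_inner_commute[of v u] by simp_all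
  then have "l2_inner (\<lambda>s. u s + v s + r s) (\<lambda>s. u s + v s + r s) = l2_inner u u + l2_inner v v + l2_inner r r"
    by (rule l2_inner_add3_self_orthogonal[OF cont(2,3) cont_r orth])
  then show ?thesis
    by (simp add: r_def)
qed

lemma l2_inner_const_left: "l2_inner (\<lambda>s. c) f = c * integral {0..2*pi} f"
  by (simp add: l2_inner_def)

lemma d2_square_eq:
  assumes "continuous_on UNIV f" "continuous_on UNIV g"
  shows "(d2 f g)\<^sup>2 = l2_inner (\<lambda>s. f s - g s) (\<lambda>s. f s - g s)"
  using l2_inner_self_nonneg[of "\<lambda>s. f s - g s"] assms
  by (simp add: d2_def l2_inner_def power2_eq_square continuous_intros)

section \<open>Trigonometric modes and Fourier coefficients\<close>

lemma integral_cos_int_mult: "integral {0..2*pi} (\<lambda>s. cos (of_int k * s)) = 2 * pi * of_bool (k = 0)"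
proof (cases "k = 0")
  case False
  have "((\<lambda>s. cos (of_int k * s)) has_integral
      (sin (of_int k * (2*pi)) / of_int k - sin (of_int k * 0) / of_int k)) {0..2*pi}"
    using False
    by (intro fundamental_theorem_of_calculus)
       (auto intro!: derivative_eq_intros simp: has_real_derivative_iff_has_vector_derivative[symmetric])
  moreover have "sin (of_int k * (2*pi)) = 0"
    by (metis mult.commute sin_int_2pin)
  ultimately show ?thesis using False by (simp add: integral_unique)
qed simp

lemma integral_sin_int_mult: "integral {0..2*pi} (\<lambda>s. sin (of_int k * s)) = 0"
proof (cases "k = 0")
  case False
  have "((\<lambda>s. sin (of_int k * s)) has_integral
      (- cos (of_int k * (2*pi)) / of_int k - (- cos (of_int k * 0) / of_int k))) {0..2*pi}"
    using False
    by (intro fundamental_theorem_of_calculus)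
       (auto intro!: derivative_eq_intros simp: has_real_derivative_iff_has_vector_derivative[symmetric])
  moreover have "cos (of_int k * (2*pi)) = 1"
    by (metis mult.commute cos_int_2pin)
  ultimately show ?thesis using False by (simp add: integral_unique)
qed simp

definition cos_mode :: "nat \<Rightarrow> real \<Rightarrow> real" where
  "cos_mode n s = cos (real n * s)"

definition sin_mode :: "nat \<Rightarrow> real \<Rightarrow> real" where
  "sin_mode n s = sin (real n * s)"

lemma continuous_on_cos_mode [continuous_intros]: "continuous_on S (cos_mode n)"
  unfolding cos_mode_def by (intro continuous_intros)

lemma continuous_on_sin_mode [continuous_intros]: "continuous_on S (sin_mode n)"
  unfolding sin_mode_def by (intro continuous_intros)

lemma l2_inner_cos_mode_cos_mode:
  "l2_inner (cos_mode n) (cos_mode m) = (if n = m then if n = 0 then 2 * pi else pi else 0)"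
proof -
  have "l2_inner (cos_mode n) (cos_mode m) = integral {0..2*pi}
      (\<lambda>s. cos (of_int (int n - int m) * s) / 2 + cos (of_int (int n + int m) * s) / 2)"
    unfolding l2_inner_def cos_mode_def
    by (simp add: cos_times_cos left_diff_distrib distrib_right add_divide_distrib)
  also have "\<dots> = pi * of_bool (n = m) + pi * of_bool (n = 0 \<and> m = 0)"
    by (simp add: integral_add integral_divide integrable_continuous_interval continuous_intros
        integral_cos_int_mult del: of_int_diff of_int_add)
  finally show ?thesis by auto
qed

lemma l2_inner_sin_mode_sin_mode:
  "l2_inner (sin_mode n) (sin_mode m) = (if n = m \<and> n \<noteq> 0 then pi else 0)"
proof -
  have "l2_inner (sin_mode n) (sin_mode m) = integral {0..2*pi}
      (\<lambda>s. cos (of_int (int n - int m) * s) / 2 - cos (of_int (int n + int m) * s) / 2)"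
    unfolding l2_inner_def sin_mode_def
    by (simp add: sin_times_sin left_diff_distrib distrib_right diff_divide_distrib)
  also have "\<dots> = pi * of_bool (n = m) - pi * of_bool (n = 0 \<and> m = 0)"
    by (simp add: integral_diff integral_divide integrable_continuous_interval continuous_intros
        integral_cos_int_mult del: of_int_diff of_int_add)
  finally show ?thesis by auto
qed

lemma l2_inner_sin_mode_cos_mode: "l2_inner (sin_mode n) (cos_mode m) = 0"
proof -
  have "l2_inner (sin_mode n) (cos_mode m) = integral {0..2*pi}
      (\<lambda>s. sin (of_int (int n + int m) * s) / 2 + sin (of_int (int n - int m) * s) / 2)"
    unfolding l2_inner_def sin_mode_def cos_mode_def
    by (simp add: sin_times_cos left_diff_distrib distrib_right add_divide_distrib)
  also have "\<dots> = 0"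
    by (simp add: integral_add integral_divide integrable_continuous_interval continuous_intros
        integral_sin_int_mult del: of_int_diff of_int_add)
  finally show ?thesis .
qed

lemma l2_inner_cos_mode_sin_mode: "l2_inner (cos_mode n) (sin_mode m) = 0"
  using l2_inner_sin_mode_cos_mode by (simp add: l2_inner_commute)

definition fourier_cos :: "(real \<Rightarrow> real) \<Rightarrow> nat \<Rightarrow> real" where
  "fourier_cos g n = l2_inner g (cos_mode n)"

definition fourier_sin :: "(real \<Rightarrow> real) \<Rightarrow> nat \<Rightarrow> real" where
  "fourier_sin g n = l2_inner g (sin_mode n)"

text \<open>The coefficients above are \<open>\<pi>\<close> times the usual ones, and the partial sum below
  omits the constant mode.\<close>

definition fourier_sum :: "(real \<Rightarrow> real) \<Rightarrow> nat \<Rightarrow> real \<Rightarrow> real" where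
  "fourier_sum g N s =
     (\<Sum>n=1..N. fourier_cos g n * cos_mode n s + fourier_sin g n * sin_mode n s) / pi"

lemma continuous_on_fourier_sum [continuous_intros]: "continuous_on S (fourier_sum g N)"
  unfolding fourier_sum_def by (intro continuous_intros) auto

lemma l2_inner_fourier_sum_left:
  assumes "continuous_on UNIV f"
  shows "l2_inner (fourier_sum g N) f =
    (\<Sum>n=1..N. fourier_cos g n * l2_inner (cos_mode n) f + fourier_sin g n * l2_inner (sin_mode n) f) / pi"
  using assms unfolding fourier_sum_def
  by (simp add: l2_inner_divide_left l2_inner_sum_left l2_inner_add_left l2_inner_scale_left
      continuous_intros)

lemma fourier_cos_fourier_sum:
  "fourier_cos (fourier_sum g N) m = (if 1 \<le> m \<and> m \<le> N then fourier_cos g m else 0)"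
proof -
  have "fourier_cos (fourier_sum g N) m = (\<Sum>n=1..N. fourier_cos g n * (if n = m then pi else 0)) / pi"
    unfolding fourier_cos_def[of "fourier_sum g N"]
    by (subst l2_inner_fourier_sum_left)
       (auto simp: continuous_intros l2_inner_cos_mode_cos_mode l2_inner_sin_mode_cos_mode intro!: sum.cong)
  then show ?thesis
    by (simp add: sum.delta' if_distrib[of "\<lambda>x. _ * x"] cong: if_cong)
qed

lemma fourier_sin_fourier_sum:
  "fourier_sin (fourier_sum g N) m = (if 1 \<le> m \<and> m \<le> N then fourier_sin g m else 0)"
proof -
  have "fourier_sin (fourier_sum g N) m = (\<Sum>n=1..N. fourier_sin g n * (if n = m then pi else 0)) / pi"
    unfolding fourier_sin_def[of "fourier_sum g N"]
    by (subst l2_inner_fourier_sum_left)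
       (auto simp: continuous_intros l2_inner_sin_mode_sin_mode l2_inner_cos_mode_sin_mode intro!: sum.cong)
  then show ?thesis
    by (simp add: sum.delta' if_distrib[of "\<lambda>x. _ * x"] cong: if_cong)
qed

lemma l2_inner_fourier_sum_right:
  assumes "continuous_on UNIV f"
  shows "l2_inner f (fourier_sum g N) =
    (\<Sum>n=1..N. fourier_cos g n * fourier_cos f n + fourier_sin g n * fourier_sin f n) / pi"
proof -
  have "l2_inner (cos_mode n) f = fourier_cos f n" "l2_inner (sin_mode n) f = fourier_sin f n" for n
    by (simp_all add: fourier_cos_def fourier_sin_def l2_inner_commute)
  then show ?thesis
    using l2_inner_fourier_sum_left[OF assms, of g N] by (simp add: l2_inner_commute[of f])
qed

lemma l2_inner_fourier_sum_self:
  "l2_inner (fourier_sum g N) (fourier_sum g N) = (\<Sum>n=1..N. (fourier_cos g n)\<^sup>2 + (fourier_sin g n)\<^sup>2) / pi"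
  by (simp add: l2_inner_fourier_sum_right continuous_intros fourier_cos_fourier_sum
      fourier_sin_fourier_sum power2_eq_square)

lemma l2_inner_residual_fourier_sum:
  assumes "continuous_on UNIV g"
  shows "l2_inner (\<lambda>s. g s - fourier_sum g N s) (fourier_sum g N) = 0"
  using assms by (simp add: l2_inner_diff_left l2_inner_fourier_sum_right l2_inner_fourier_sum_self
      continuous_intros power2_eq_square)

lemma bessel_identity:
  assumes g: "continuous_on UNIV g"
  shows "l2_inner g g = l2_inner (\<lambda>s. g s - fourier_sum g N s) (\<lambda>s. g s - fourier_sum g N s)
    + (\<Sum>n=1..N. (fourier_cos g n)\<^sup>2 + (fourier_sin g n)\<^sup>2) / pi"
proof -
  have "l2_inner g g = l2_inner (\<lambda>s. (g s - fourier_sum g N s) + fourier_sum g N s)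
      (\<lambda>s. (g s - fourier_sum g N s) + fourier_sum g N s)"
    by simp
  then show ?thesis
    using g l2_inner_residual_fourier_sum[OF g]
    by (simp only: l2_inner_add_self l2_inner_fourier_sum_self continuous_intros)
qed

lemma fourier_cos_residual:
  assumes "continuous_on UNIV g" and "fourier_cos g 0 = 0" and "m \<le> N"
  shows "fourier_cos (\<lambda>s. g s - fourier_sum g N s) m = 0"
  using assms fourier_cos_fourier_sum[of g N m]
  by (cases "m = 0") (simp_all add: fourier_cos_def l2_inner_diff_left continuous_intros)

lemma fourier_sin_residual:
  assumes "continuous_on UNIV g" and "m \<le> N"
  shows "fourier_sin (\<lambda>s. g s - fourier_sum g N s) m = 0"
proof (cases "m = 0")
  case True
  then show ?thesis by (simp add: fourier_sin_def sin_mode_def l2_inner_def)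
next
  case False
  then show ?thesis
    using assms fourier_sin_fourier_sum[of g N m]
    by (simp add: fourier_sin_def l2_inner_diff_left continuous_intros)
qed

section \<open>Wirtinger's inequality\<close>

text \<open>Frequencies are integers so that products stay within the representation.\<close>

definition trig_poly :: "(int \<times> real \<times> real) list \<Rightarrow> real \<Rightarrow> real" where
  "trig_poly L s = (\<Sum>(n, a, b) \<leftarrow> L. a * cos (of_int n * s) + b * sin (of_int n * s))"

lemma trig_poly_Nil [simp]: "trig_poly [] s = 0"
  and trig_poly_Cons [simp]:
    "trig_poly ((n, a, b) # L) s = a * cos (of_int n * s) + b * sin (of_int n * s) + trig_poly L s"
  and trig_poly_append: "trig_poly (L1 @ L2) s = trig_poly L1 s + trig_poly L2 s"
  by (simp_all add: trig_poly_def)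

lemma continuous_on_trig_poly [continuous_intros]: "continuous_on S (trig_poly L)"
proof (induction L)
  case (Cons x L)
  obtain n a b where "x = (n, a, b)" by (cases x)
  with Cons show ?case
    by (simp add: trig_poly_def) (intro continuous_intros Cons[unfolded trig_poly_def])
qed (simp add: trig_poly_def)

lemma trig_poly_mult: "\<exists>L. \<forall>s. trig_poly L1 s * trig_poly L2 s = trig_poly L s"
proof -
  have term_mult: "\<exists>L. \<forall>s. (a * cos (of_int n * s) + b * sin (of_int n * s)) * trig_poly L2 s = trig_poly L s"
    for n a b
  proof (induction L2)
    case (Cons x L2)
    obtain m c d where x: "x = (m, c, d)" by (cases x)
    from Cons obtain L where L:
      "\<forall>s. (a * cos (of_int n * s) + b * sin (of_int n * s)) * trig_poly L2 s = trig_poly L s"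
      by blast
    define L0 where "L0 = [(n - m, (a*c + b*d) / 2, (b*c - a*d) / 2), (n + m, (a*c - b*d) / 2, (a*d + b*c) / 2)]"
    have "(a * cos (of_int n * s) + b * sin (of_int n * s)) * (c * cos (of_int m * s) + d * sin (of_int m * s))
        = trig_poly L0 s" for s
    proof -
      have "of_int (n - m) * s = of_int n * s - of_int m * s" "of_int (n + m) * s = of_int n * s + of_int m * s"
        by (simp_all add: algebra_simps)
      then show ?thesis
        by (simp add: L0_def cos_diff cos_add sin_diff sin_add field_simps)
    qed
    then have "\<forall>s. (a * cos (of_int n * s) + b * sin (of_int n * s)) * trig_poly (x # L2) s = trig_poly (L0 @ L) s"
      using L by (simp add: x distrib_left trig_poly_append)
    then show ?case by blast
  qed (auto intro: exI[of _ "[]"])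
  show ?thesis
  proof (induction L1)
    case (Cons x L1)
    obtain n a b where x: "x = (n, a, b)" by (cases x)
    obtain L where L: "\<forall>s. trig_poly L1 s * trig_poly L2 s = trig_poly L s"
      using Cons by blast
    obtain L' where L': "\<forall>s. (a * cos (of_int n * s) + b * sin (of_int n * s)) * trig_poly L2 s = trig_poly L' s"
      using term_mult by blast
    have "\<forall>s. trig_poly (x # L1) s * trig_poly L2 s = trig_poly (L' @ L) s"
      using L L' by (simp add: x distrib_right trig_poly_append)
    then show ?case by blast
  qed (auto intro: exI[of _ "[]"])
qed

lemma l2_inner_residual_trig_poly:
  assumes g: "continuous_on UNIV g" and g0: "fourier_cos g 0 = 0"
    and L: "\<forall>(n, a, b) \<in> set L. nat \<bar>n\<bar> \<le> N"
  shows "l2_inner (\<lambda>s. g s - fourier_sum g N s) (trig_poly L) = 0"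
  using L
proof (induction L)
  case Nil
  then show ?case by (simp add: l2_inner_def)
next
  case (Cons x L)
  obtain n a b where x: "x = (n, a, b)" by (cases x)
  define m where "m = nat \<bar>n\<bar>"
  define b' where "b' = (if n \<ge> 0 then b else - b)"
  have "trig_poly (x # L) = (\<lambda>s. (a * cos_mode m s + b' * sin_mode m s) + trig_poly L s)"
    by (auto simp: fun_eq_iff x m_def b'_def cos_mode_def sin_mode_def)
  moreover have "m \<le> N" using Cons.prems x m_def by auto
  ultimately show ?case
    using Cons g fourier_cos_residual[OF g g0] fourier_sin_residual[OF g]
    by (simp add: l2_inner_add_right l2_inner_scale_right continuous_intros fourier_cos_def fourier_sin_def)
qed

lemma fourier_sum_best_approx:
  assumes g: "continuous_on UNIV g" and g0: "fourier_cos g 0 = 0"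
    and L: "\<forall>(n, a, b) \<in> set L. nat \<bar>n\<bar> \<le> N"
  shows "l2_inner (\<lambda>s. g s - fourier_sum g N s) (\<lambda>s. g s - fourier_sum g N s)
    \<le> l2_inner (\<lambda>s. g s - trig_poly L s) (\<lambda>s. g s - trig_poly L s)"
proof -
  define r where "r = (\<lambda>s. g s - fourier_sum g N s)"
  define d where "d = (\<lambda>s. fourier_sum g N s - trig_poly L s)"
  have cr: "continuous_on UNIV r" and cd: "continuous_on UNIV d"
    unfolding r_def d_def by (intro continuous_intros g)+
  have "l2_inner r d = 0"
    using l2_inner_residual_fourier_sum[OF g] l2_inner_residual_trig_poly[OF g g0 L] cr
    by (simp add: d_def r_def l2_inner_diff_right continuous_intros)
  moreover have "(\<lambda>s. g s - trig_poly L s) = (\<lambda>s. r s + d s)"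
    by (simp add: r_def d_def)
  ultimately show ?thesis
    using l2_inner_add_self[OF cr cd] l2_inner_self_nonneg[OF cd] by (simp add: r_def)
qed

lemma periodic_Arg_cis:
  assumes "periodic g"
  shows "g (Arg (cis s)) = g s"
proof -
  obtain k where "Im (\<i> * complex_of_real s) - of_int k * (2 * pi) = Arg (exp (\<i> * complex_of_real s))"
    using Arg_exp_diff_2pi by blast
  then have "Arg (cis s) = s + 2 * pi * of_int (- k)"
    by (simp add: cis_conv_exp algebra_simps)
  then show ?thesis
    using periodic_add_int_multiple[OF assms, of s "- k"] by simp
qed

text \<open>\<open>Arg\<close> jumps on the negative real axis, but the jump is a multiple of \<open>2\<pi>\<close>.\<close>

lemma continuous_on_periodic_Arg:
  fixes g :: "real \<Rightarrow> real"
  assumes per: "periodic g" and cont: "continuous_on UNIV g"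
  shows "continuous_on (sphere 0 1) (\<lambda>z. g (Arg z))"
proof (rule continuous_at_imp_continuous_on, intro ballI)
  fix z :: complex
  assume "z \<in> sphere 0 1"
  then have z0: "z \<noteq> 0" by auto
  have gc: "isCont g x" for x
    using cont by (simp add: continuous_on_eq_continuous_at)
  show "isCont (\<lambda>z. g (Arg z)) z"
  proof (cases "z \<in> \<real>\<^sub>\<le>\<^sub>0")
    case False
    then show ?thesis by (intro isCont_o2[OF continuous_at_Arg[OF False]] gc)
  next
    case True
    then have "- z \<notin> \<real>\<^sub>\<le>\<^sub>0"
      using z0 by (auto simp: complex_nonpos_Reals_iff complex_eq_iff)
    then have "isCont (\<lambda>w. g (Arg (- w) + pi)) z"
      by (intro isCont_o2[OF _ gc] continuous_intros isCont_o2[OF _ continuous_at_Arg]) auto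
    moreover have "g (Arg w) = g (Arg (- w) + pi)" if "w \<noteq> 0" for w
      using Arg_minus[OF that] per[unfolded periodic_def, rule_format, of "Arg w"]
      by (cases "Arg w \<le> 0") (simp_all add: add.commute)
    then have "\<forall>\<^sub>F w in nhds z. g (Arg w) = g (Arg (- w) + pi)"
      using t1_space_nhds[OF z0] by (auto elim!: eventually_mono)
    ultimately show ?thesis
      using isCont_cong by metis
  qed
qed

lemma trig_poly_approx:
  fixes g :: "real \<Rightarrow> real"
  assumes per: "periodic g" and cont: "continuous_on UNIV g" and e: "0 < e"
  shows "\<exists>L. \<forall>s. \<bar>g s - trig_poly L s\<bar> < e"
proof -
  define P where "P f \<longleftrightarrow> continuous_on (sphere 0 1) f \<and> (\<exists>L. \<forall>s. f (cis s) = trig_poly L s)"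
    for f :: "complex \<Rightarrow> real"
  have "\<exists>f. P f \<and> (\<forall>z \<in> sphere 0 1. \<bar>g (Arg z) - f z\<bar> < e)"
  proof (rule Stone_Weierstrass_HOL[where P = P])
    show "P (\<lambda>z. c)" for c
      unfolding P_def by (auto intro!: exI[of _ "[(0, c, 0)]"] continuous_intros)
    show "P (\<lambda>z. f z + h z)" if "P f \<and> P h" for f h
      using that unfolding P_def by (metis continuous_on_add trig_poly_append)
    show "P (\<lambda>z. f z * h z)" if "P f \<and> P h" for f h
      using that trig_poly_mult unfolding P_def by (metis continuous_on_mult)
    show "\<exists>f. P f \<and> f z \<noteq> f w" if "z \<in> sphere 0 1 \<and> w \<in> sphere 0 1 \<and> z \<noteq> w" for z w
    proof -
      have "P Re" "P Im"
        unfolding P_def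
        by (auto intro: exI[of _ "[(1, 1, 0)]"] exI[of _ "[(1, 0, 1)]"] continuous_intros)
      then show ?thesis using that complex_eq_iff by blast
    qed
  qed (use continuous_on_periodic_Arg[OF per cont] e in \<open>auto simp: P_def\<close>)
  then obtain f L where L: "\<forall>s. f (cis s) = trig_poly L s" and fe: "\<forall>z \<in> sphere 0 1. \<bar>g (Arg z) - f z\<bar> < e"
    by (auto simp: P_def)
  have "\<bar>g s - trig_poly L s\<bar> < e" for s
    using fe[rule_format, of "cis s"] L periodic_Arg_cis[OF per] by simp
  then show ?thesis by blast
qed

lemma
  fixes g g' :: "real \<Rightarrow> real"
  assumes per: "periodic g"
    and der: "\<And>s. (g has_real_derivative g' s) (at s)" and cont': "continuous_on UNIV g'"
  shows fourier_cos_deriv: "fourier_cos g' n = real n * fourier_sin g n"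
    and fourier_sin_deriv: "fourier_sin g' n = - real n * fourier_cos g n"
proof -
  have cont: "continuous_on UNIV g"
    using der DERIV_isCont continuous_at_imp_continuous_on by blast
  have period: "cos (real n * (2*pi)) = 1" "sin (real n * (2*pi)) = 0" "g (2*pi) = g 0"
    using cos_int_2pin[of "int n"] sin_int_2pin[of "int n"] per[unfolded periodic_def, rule_format, of 0]
    by (simp_all add: mult.commute)
  have "integral {0..2*pi} (\<lambda>s. g' s * cos (real n * s) - real n * (g s * sin (real n * s))) = 0"
    by (rule integral_deriv_period_eq_0[where F = "\<lambda>s. g s * cos (real n * s)"])
       (auto intro!: derivative_eq_intros der simp: period)
  then show "fourier_cos g' n = real n * fourier_sin g n"
    using cont cont'
    by (simp add: fourier_cos_def fourier_sin_def l2_inner_def cos_mode_def sin_mode_def integral_diff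
        continuous_on_UNIV_integrable continuous_intros)
  have "integral {0..2*pi} (\<lambda>s. g' s * sin (real n * s) + real n * (g s * cos (real n * s))) = 0"
    by (rule integral_deriv_period_eq_0[where F = "\<lambda>s. g s * sin (real n * s)"])
       (auto intro!: derivative_eq_intros der simp: period)
  then show "fourier_sin g' n = - real n * fourier_cos g n"
    using cont cont'
    by (simp add: fourier_cos_def fourier_sin_def l2_inner_def cos_mode_def sin_mode_def integral_add
        continuous_on_UNIV_integrable continuous_intros)
qed

text \<open>By Parseval, \<open>\<parallel>g'\<parallel>\<^sup>2 = \<Sum> n\<^sup>2 (a\<^sub>n\<^sup>2 + b\<^sub>n\<^sup>2) \<ge> 4 \<Sum> (a\<^sub>n\<^sup>2 + b\<^sub>n\<^sup>2) = 4 \<parallel>g\<parallel>\<^sup>2\<close>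
  when \<open>g\<close> has no modes \<open>0\<close> and \<open>1\<close>. Parseval is replaced by Bessel's identity up to a
  degree \<open>N\<close> at which a trigonometric polynomial approximates \<open>g\<close> uniformly within \<open>e\<close>.\<close>

lemma l2_inner_le_trig_poly_approx:
  assumes cont: "continuous_on UNIV g" and mode0: "fourier_cos g 0 = 0"
    and approx: "\<forall>s. \<bar>g s - trig_poly L s\<bar> \<le> e" and deg: "\<forall>(n, a, b) \<in> set L. nat \<bar>n\<bar> \<le> N"
  shows "l2_inner g g \<le> 2 * pi * e\<^sup>2 + (\<Sum>n=1..N. (fourier_cos g n)\<^sup>2 + (fourier_sin g n)\<^sup>2) / pi"
proof -
  have "l2_inner g g \<le> l2_inner (\<lambda>s. g s - trig_poly L s) (\<lambda>s. g s - trig_poly L s)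
      + (\<Sum>n=1..N. (fourier_cos g n)\<^sup>2 + (fourier_sin g n)\<^sup>2) / pi"
    using bessel_identity[OF cont, of N] fourier_sum_best_approx[OF cont mode0 deg] by simp
  also have "l2_inner (\<lambda>s. g s - trig_poly L s) (\<lambda>s. g s - trig_poly L s) \<le> 2 * pi * e\<^sup>2"
    using approx by (intro l2_inner_self_le) (auto intro!: continuous_intros cont)
  finally show ?thesis by simp
qed

lemma bessel_sum_le_l2_inner_deriv:
  fixes g g' :: "real \<Rightarrow> real"
  assumes per: "periodic g"
    and der: "\<And>s. (g has_real_derivative g' s) (at s)" and cont': "continuous_on UNIV g'"
    and modes: "fourier_cos g 1 = 0" "fourier_sin g 1 = 0"
  shows "4 * (\<Sum>n=1..N. (fourier_cos g n)\<^sup>2 + (fourier_sin g n)\<^sup>2) \<le> pi * l2_inner g' g'"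
proof -
  have "4 * (\<Sum>n=1..N. (fourier_cos g n)\<^sup>2 + (fourier_sin g n)\<^sup>2)
      \<le> (\<Sum>n=1..N. (real n)\<^sup>2 * ((fourier_cos g n)\<^sup>2 + (fourier_sin g n)\<^sup>2))"
    unfolding sum_distrib_left
  proof (rule sum_mono)
    fix n
    assume "n \<in> {1..N}"
    then consider "n = 1" | "(2::real) \<le> real n" by fastforce
    then show "4 * ((fourier_cos g n)\<^sup>2 + (fourier_sin g n)\<^sup>2)
        \<le> (real n)\<^sup>2 * ((fourier_cos g n)\<^sup>2 + (fourier_sin g n)\<^sup>2)"
    proof cases
      case 1
      then show ?thesis using modes by simp
    next
      case 2
      then have "4 \<le> (real n)\<^sup>2" using power_mono[of 2 "real n" 2] by simp
      then show ?thesis by (rule mult_right_mono) simp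
    qed
  qed
  also have "\<dots> = (\<Sum>n=1..N. (fourier_cos g' n)\<^sup>2 + (fourier_sin g' n)\<^sup>2)"
    by (simp add: fourier_cos_deriv[OF per der cont'] fourier_sin_deriv[OF per der cont']
        power_mult_distrib algebra_simps)
  also have "\<dots> \<le> pi * l2_inner g' g'"
    using bessel_identity[OF cont', of N] l2_inner_self_nonneg[of "\<lambda>s. g' s - fourier_sum g' N s"] cont'
    by (simp add: continuous_intros field_simps)
  finally show ?thesis .
qed

lemma wirtinger_inequality:
  fixes g g' :: "real \<Rightarrow> real"
  assumes per: "periodic g"
    and der: "\<And>s. (g has_real_derivative g' s) (at s)" and cont': "continuous_on UNIV g'"
    and modes: "fourier_cos g 0 = 0" "fourier_cos g 1 = 0" "fourier_sin g 1 = 0"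
  shows "4 * l2_inner g g \<le> l2_inner g' g'"
proof (rule field_le_epsilon)
  fix d :: real
  assume "0 < d"
  define e where "e = sqrt (d / (8 * pi))"
  have e: "0 < e" "8 * pi * e\<^sup>2 = d"
    unfolding e_def using \<open>0 < d\<close> by simp_all
  have cont: "continuous_on UNIV g"
    using der DERIV_isCont continuous_at_imp_continuous_on by blast
  obtain L where L: "\<forall>s. \<bar>g s - trig_poly L s\<bar> < e"
    using trig_poly_approx[OF per cont e(1)] by blast
  define N where "N = Max (insert 0 ((\<lambda>(n, a, b). nat \<bar>n\<bar>) ` set L))"
  have deg: "\<forall>(n, a, b) \<in> set L. nat \<bar>n\<bar> \<le> N"
    unfolding N_def by (force intro!: Max_ge)
  define S where "S = (\<Sum>n=1..N. (fourier_cos g n)\<^sup>2 + (fourier_sin g n)\<^sup>2)"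
  have "l2_inner g g \<le> 2 * pi * e\<^sup>2 + S / pi"
    unfolding S_def using L deg
    by (intro l2_inner_le_trig_poly_approx cont modes(1)) (auto intro: less_imp_le)
  moreover have "4 * (S / pi) \<le> l2_inner g' g'"
    using bessel_sum_le_l2_inner_deriv[OF per der cont' modes(2,3), of N] by (simp add: S_def field_simps)
  ultimately show "4 * l2_inner g g \<le> l2_inner g' g' + d"
    using e(2) by linarith
qed

section \<open>Averaging over the rotations by multiples of \<open>2\<pi>/k\<close>\<close>

lemma sum_cos_equidistant:
  assumes k: "k \<ge> 2"
  shows "(\<Sum>j<k. cos (x - 2 * pi * real j / real k)) = 0"
proof -
  define A where "A = pi / real k"
  have kpos: "real k > 0" using k by simp
  have "0 < A" "A < pi" unfolding A_def using k by (auto simp: field_simps)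
  then have sinA: "sin A > 0" by (rule sin_gt_zero)
  define a where "a j = sin (x + A - 2 * pi * real j / real k)" for j :: nat
  \<comment> \<open>\<open>2 sin A cos y = sin (y + A) - sin (y - A)\<close> telescopes\<close>
  have "2 * sin A * cos (x - 2 * pi * real j / real k) = a j - a (Suc j)" for j
  proof -
    define y where "y = x - 2 * pi * real j / real k"
    have eqs: "x + A - 2 * pi * real j / real k = y + A"
      "x + A - 2 * pi * real (Suc j) / real k = y - A"
      unfolding y_def A_def using kpos by (simp_all add: field_simps)
    show ?thesis
      unfolding a_def eqs y_def[symmetric] by (simp add: sin_add sin_diff)
  qed
  then have "2 * sin A * (\<Sum>j<k. cos (x - 2 * pi * real j / real k)) = (\<Sum>j<k. a j - a (Suc j))"
    by (simp add: sum_distrib_left)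
  also have "\<dots> = a 0 - a k" by (rule sum_lessThan_telescope')
  also have "a k = a 0"
    unfolding a_def using kpos by (simp add: sin_diff)
  finally show ?thesis using sinA by simp
qed

lemma sum_sin_equidistant:
  assumes "k \<ge> 2"
  shows "(\<Sum>j<k. sin (x - 2 * pi * real j / real k)) = 0"
proof -
  have "cos (x - pi / 2 - c) = sin (x - c)" for c
    by (simp add: cos_diff sin_diff)
  then show ?thesis
    using sum_cos_equidistant[OF assms, of "x - pi / 2"] by simp
qed

definition rot_avg :: "nat \<Rightarrow> (real \<Rightarrow> real) \<Rightarrow> real \<Rightarrow> real" where
  "rot_avg k f s = (1 / real k) * (\<Sum>j<k. f (s + 2 * pi * real j / real k))"

lemma continuous_on_rot_avg [continuous_intros]:
  "continuous_on UNIV f \<Longrightarrow> continuous_on UNIV (rot_avg k f)"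
  unfolding rot_avg_def by (intro continuous_intros continuous_on_shift)

lemma periodic_rot_avg:
  assumes "periodic f"
  shows "periodic (rot_avg k f)"
proof -
  have "f (x + 2 * pi + c) = f (x + c)" for x c
    using assms[unfolded periodic_def, rule_format, of "x + c"] by (simp add: algebra_simps)
  then show ?thesis
    unfolding periodic_def rot_avg_def by simp
qed

lemma has_real_derivative_rot_avg:
  assumes "\<And>s. (f has_real_derivative f' s) (at s)"
  shows "(rot_avg k f has_real_derivative rot_avg k f' s) (at s)"
  unfolding rot_avg_def
  by (intro DERIV_cmult DERIV_sum) (metis DERIV_shift assms)

lemma rot_avg_shift:
  assumes k: "k \<ge> 1" and per: "periodic f"
  shows "rot_avg k f (s + 2 * pi * real i / real k) = rot_avg k f s"
proof -
  have step: "rot_avg k f (t + 2 * pi / real k) = rot_avg k f t" for t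
  proof -
    define G where "G j = f (t + 2 * pi * real j / real k)" for j
    have "f (t + 2 * pi / real k + 2 * pi * real j / real k) = G (Suc j)" for j
      unfolding G_def using k by (simp add: field_simps)
    moreover have "G k = G 0"
      unfolding G_def using k per by (simp add: periodic_def)
    then have "(\<Sum>j<k. G (Suc j)) = (\<Sum>j<k. G j)"
      using sum.lessThan_Suc_shift[of G k] sum.lessThan_Suc[of G k] by simp
    ultimately show ?thesis
      by (simp add: rot_avg_def G_def)
  qed
  show ?thesis
  proof (induction i)
    case (Suc i)
    have "s + 2 * pi * real (Suc i) / real k = (s + 2 * pi * real i / real k) + 2 * pi / real k"
      by (simp add: add_divide_distrib algebra_simps)
    then show ?case
      using Suc step[of "s + 2 * pi * real i / real k"] by (simp only:)
  qed simp
qed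

lemma integral_rot_avg:
  assumes "periodic f" and "continuous_on UNIV f" and "k \<ge> 1"
  shows "integral {0..2*pi} (rot_avg k f) = integral {0..2*pi} f"
proof -
  have "integral {0..2*pi} (rot_avg k f)
      = (1 / real k) * (\<Sum>j<k. integral {0..2*pi} (\<lambda>s. f (s + 2 * pi * real j / real k)))"
    unfolding rot_avg_def
    using assms by (simp add: integral_sum continuous_on_UNIV_integrable continuous_on_shift)
  then show ?thesis
    using assms by (simp add: integral_periodic_shift)
qed

lemma l2_inner_rot_avg_left:
  assumes per: "periodic f" "periodic g" and cont: "continuous_on UNIV f" "continuous_on UNIV g"
    and k: "k \<ge> 1"
  shows "l2_inner (rot_avg k f) g =
    l2_inner f (\<lambda>t. (1 / real k) * (\<Sum>j<k. g (t - 2 * pi * real j / real k)))"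
proof -
  define c where "c j = 2 * pi * real j / real k" for j
  have shifted: "continuous_on UNIV (\<lambda>t. g (t - c j))" for j
    using continuous_on_shift[OF cont(2), of "- c j"] by simp
  have "l2_inner (rot_avg k f) g = (1 / real k) * (\<Sum>j<k. integral {0..2*pi} (\<lambda>s. f (s + c j) * g s))"
    unfolding l2_inner_def rot_avg_def c_def[symmetric]
    using cont by (simp add: sum_distrib_right integral_sum continuous_on_UNIV_integrable
        continuous_on_shift continuous_intros mult.assoc)
  also have "\<dots> = (1 / real k) * (\<Sum>j<k. integral {0..2*pi} (\<lambda>t. f t * g (t - c j)))"
  proof -
    have "periodic (\<lambda>t. f t * g (t - c j))" for j
      using per by (simp add: periodic_def algebra_simps)
         (metis add.commute diff_add_eq)
    then have "integral {0..2*pi} (\<lambda>s. f (s + c j) * g s) = integral {0..2*pi} (\<lambda>t. f t * g (t - c j))" for j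
      using integral_periodic_shift[of "\<lambda>t. f t * g (t - c j)" "c j"] cont shifted
      by (simp add: continuous_intros)
    then show ?thesis by simp
  qed
  also have "\<dots> = l2_inner f (\<lambda>t. (1 / real k) * (\<Sum>j<k. g (t - c j)))"
    unfolding l2_inner_def
    using cont shifted k by (simp add: sum_distrib_left integral_sum continuous_on_UNIV_integrable
        continuous_intros mult.left_commute)
  finally show ?thesis by (simp add: c_def)
qed

lemma
  assumes "periodic f" and "continuous_on UNIV f" and "k \<ge> 2"
  shows fourier_cos_rot_avg_1: "fourier_cos (rot_avg k f) 1 = 0"
    and fourier_sin_rot_avg_1: "fourier_sin (rot_avg k f) 1 = 0"
proof -
  have modes: "cos_mode 1 = cos" "sin_mode 1 = sin" and per: "periodic cos" "periodic sin"
    by (simp_all add: fun_eq_iff periodic_def cos_mode_def sin_mode_def)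
  have "fourier_cos (rot_avg k f) 1 = l2_inner f (\<lambda>t. (1 / real k) * (\<Sum>j<k. cos (t - 2 * pi * real j / real k)))"
    unfolding fourier_cos_def modes using assms per by (intro l2_inner_rot_avg_left) (auto intro: continuous_on_cos[OF continuous_on_id])
  then show "fourier_cos (rot_avg k f) 1 = 0"
    using assms by (simp add: sum_cos_equidistant l2_inner_def)
  have "fourier_sin (rot_avg k f) 1 = l2_inner f (\<lambda>t. (1 / real k) * (\<Sum>j<k. sin (t - 2 * pi * real j / real k)))"
    unfolding fourier_sin_def modes using assms per by (intro l2_inner_rot_avg_left) (auto intro: continuous_on_sin[OF continuous_on_id])
  then show "fourier_sin (rot_avg k f) 1 = 0"
    using assms by (simp add: sum_sin_equidistant l2_inner_def)
qed

lemma l2_inner_rot_avg_self: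
  assumes per: "periodic f" and cont: "continuous_on UNIV f" and k: "k \<ge> 1"
  shows "l2_inner (rot_avg k f) (rot_avg k f) = l2_inner f (rot_avg k f)"
proof -
  have "rot_avg k (\<lambda>t. f t * rot_avg k f t) = (\<lambda>s. rot_avg k f s * rot_avg k f s)"
  proof
    fix s
    have "rot_avg k (\<lambda>t. f t * rot_avg k f t) s =
        (1 / real k) * (\<Sum>j<k. f (s + 2 * pi * real j / real k) * rot_avg k f s)"
      unfolding rot_avg_def[of k "\<lambda>t. f t * rot_avg k f t"] rot_avg_shift[OF k per] ..
    also have "\<dots> = rot_avg k f s * rot_avg k f s"
      unfolding sum_distrib_right[symmetric] by (simp add: rot_avg_def)
    finally show "rot_avg k (\<lambda>t. f t * rot_avg k f t) s = rot_avg k f s * rot_avg k f s" .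
  qed
  then have "l2_inner (rot_avg k f) (rot_avg k f) = integral {0..2*pi} (rot_avg k (\<lambda>t. f t * rot_avg k f t))"
    by (simp add: l2_inner_def)
  also have "\<dots> = l2_inner f (rot_avg k f)"
    unfolding l2_inner_def using per periodic_rot_avg[OF per] cont k
    by (intro integral_rot_avg) (auto simp: periodic_def intro!: continuous_intros)
  finally show ?thesis .
qed

lemma ops_support_eq: "ops_support k h = (\<lambda>s. rot_avg k h s - avg_width h / 2)"
  by (simp add: fun_eq_iff ops_support_def rot_avg_def)

section \<open>The Steiner disk\<close>

lemma fourier_low_modes:
  "fourier_cos h 0 = pi * avg_width h"
  "fourier_cos h 1 = pi * steiner_a1 h"
  "fourier_sin h 1 = pi * steiner_b1 h"
  by (simp_all add: fourier_cos_def fourier_sin_def l2_inner_def cos_mode_def sin_mode_def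
      avg_width_def steiner_a1_def steiner_b1_def)

definition steiner_disk_deriv :: "(real \<Rightarrow> real) \<Rightarrow> real \<Rightarrow> real" where
  "steiner_disk_deriv h s = steiner_b1 h * cos s - steiner_a1 h * sin s"

lemma continuous_on_steiner_disk_support [continuous_intros]: "continuous_on S (steiner_disk_support h)"
  and continuous_on_steiner_disk_deriv [continuous_intros]: "continuous_on S (steiner_disk_deriv h)"
  unfolding steiner_disk_support_def[abs_def] steiner_disk_deriv_def[abs_def] by (intro continuous_intros)+

lemma has_real_derivative_steiner_disk_support:
  "(steiner_disk_support h has_real_derivative steiner_disk_deriv h s) (at s)"
  unfolding steiner_disk_support_def[abs_def] steiner_disk_deriv_def
  by (auto intro!: derivative_eq_intros)

lemma l2_inner_steiner_disk_support:
  assumes "continuous_on UNIV f"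
  shows "l2_inner (steiner_disk_support h) f =
    avg_width h / 2 * fourier_cos f 0 + steiner_a1 h * fourier_cos f 1 + steiner_b1 h * fourier_sin f 1"
proof -
  have "steiner_disk_support h = (\<lambda>s. (avg_width h / 2) * cos_mode 0 s + steiner_a1 h * cos_mode 1 s
      + steiner_b1 h * sin_mode 1 s)"
    by (simp add: fun_eq_iff steiner_disk_support_def cos_mode_def sin_mode_def)
  then show ?thesis
    using assms
    by (simp add: l2_inner_add_left l2_inner_scale_left l2_inner_divide_left continuous_intros
        fourier_cos_def fourier_sin_def l2_inner_commute[of f])
qed

lemma l2_inner_steiner_disk_deriv:
  assumes "continuous_on UNIV f"
  shows "l2_inner (steiner_disk_deriv h) f = steiner_b1 h * fourier_cos f 1 - steiner_a1 h * fourier_sin f 1"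
proof -
  have "steiner_disk_deriv h = (\<lambda>s. steiner_b1 h * cos_mode 1 s - steiner_a1 h * sin_mode 1 s)"
    by (simp add: fun_eq_iff steiner_disk_deriv_def cos_mode_def sin_mode_def)
  then show ?thesis
    using assms
    by (simp add: l2_inner_diff_left l2_inner_scale_left continuous_intros fourier_cos_def fourier_sin_def
        l2_inner_commute[of f])
qed

lemma fourier_steiner_disk_support:
  "fourier_cos (steiner_disk_support h) 0 = pi * avg_width h"
  "fourier_cos (steiner_disk_support h) 1 = pi * steiner_a1 h"
  "fourier_sin (steiner_disk_support h) 1 = pi * steiner_b1 h"
  by (simp_all add: fourier_cos_def fourier_sin_def l2_inner_steiner_disk_support continuous_intros
      l2_inner_cos_mode_cos_mode l2_inner_sin_mode_sin_mode l2_inner_cos_mode_sin_mode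
      l2_inner_sin_mode_cos_mode)

lemma fourier_steiner_disk_deriv:
  "fourier_cos (steiner_disk_deriv h) 1 = pi * steiner_b1 h"
  "fourier_sin (steiner_disk_deriv h) 1 = - pi * steiner_a1 h"
  by (simp_all add: fourier_cos_def fourier_sin_def l2_inner_steiner_disk_deriv continuous_intros
      l2_inner_cos_mode_cos_mode l2_inner_sin_mode_sin_mode l2_inner_cos_mode_sin_mode
      l2_inner_sin_mode_cos_mode)

lemma l2_inner_steiner_disk_support_self_diff:
  "l2_inner (steiner_disk_support h) (steiner_disk_support h)
    - l2_inner (steiner_disk_deriv h) (steiner_disk_deriv h) = pi * (avg_width h)\<^sup>2 / 2"
  by (simp add: l2_inner_steiner_disk_support l2_inner_steiner_disk_deriv fourier_steiner_disk_support
      fourier_steiner_disk_deriv continuous_intros power2_eq_square algebra_simps del: One_nat_def)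

lemma periodic_steiner_disk_support: "periodic (steiner_disk_support h)"
  by (simp add: periodic_def steiner_disk_support_def)

section \<open>Change of variables for maps of the plane\<close>

definition pair_of_vec :: "real^2 \<Rightarrow> real \<times> real" where
  "pair_of_vec v = (v$1, v$2)"

definition vec_of_pair :: "real \<times> real \<Rightarrow> real^2" where
  "vec_of_pair p = (\<chi> i. if i = 1 then fst p else snd p)"

lemma vec_of_pair_nth [simp]: "vec_of_pair p $ 1 = fst p" "vec_of_pair p $ 2 = snd p"
  by (simp_all add: vec_of_pair_def)

lemma vec_of_pair_inverse [simp]: "pair_of_vec (vec_of_pair p) = p"
  and pair_of_vec_inverse [simp]: "vec_of_pair (pair_of_vec v) = v"
  by (simp_all add: pair_of_vec_def vec_eq_iff forall_2)

lemma bounded_linear_pair_of_vec: "bounded_linear pair_of_vec"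
  and bounded_linear_vec_of_pair: "bounded_linear vec_of_pair"
  by (auto intro!: linear_conv_bounded_linear[THEN iffD1] linearI
      simp: pair_of_vec_def vec_eq_iff forall_2)

lemma mem_vec_of_pair_image: "x \<in> vec_of_pair ` A \<longleftrightarrow> pair_of_vec x \<in> A"
  by (metis image_iff pair_of_vec_inverse vec_of_pair_inverse)

lemma mem_pair_of_vec_image: "x \<in> pair_of_vec ` A \<longleftrightarrow> vec_of_pair x \<in> A"
  by (metis image_iff pair_of_vec_inverse vec_of_pair_inverse)

lemma pair_of_vec_image_cbox: "pair_of_vec ` cbox u v = cbox (pair_of_vec u) (pair_of_vec v)"
  unfolding set_eq_iff mem_pair_of_vec_image
  by (simp add: pair_of_vec_def cbox_Pair_eq mem_box_cart forall_2 mem_Times_iff)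

lemma vec_of_pair_image_cbox: "vec_of_pair ` cbox u v = cbox (vec_of_pair u) (vec_of_pair v)"
  unfolding set_eq_iff mem_vec_of_pair_image
  by (cases u, cases v) (simp add: pair_of_vec_def cbox_Pair_eq mem_box_cart forall_2)

lemma content_pair_of_vec_cbox:
  "measure lborel (cbox (pair_of_vec u) (pair_of_vec v)) = measure lborel (cbox u v)"
proof -
  have "cbox u v = {} \<longleftrightarrow> v$1 < u$1 \<or> v$2 < u$2"
    unfolding interval_eq_empty_cart
  proof
    assume "\<exists>i. v$i < u$i"
    then obtain i where "v$i < u$i" ..
    then show "v$1 < u$1 \<or> v$2 < u$2" using exhaust_2[of i] by auto
  qed auto
  moreover have "prod f (UNIV :: 2 set) = f 1 * f 2" for f :: "2 \<Rightarrow> real"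
    by (simp add: UNIV_2)
  ultimately show ?thesis
    by (simp add: pair_of_vec_def content_Pair content_cbox_if_cart content_real_if)
qed

lemma has_integral_vec_of_pair:
  fixes J :: "real \<times> real \<Rightarrow> real"
  assumes "(J has_integral I) (cbox a b)"
  shows "((\<lambda>x. J (pair_of_vec x)) has_integral I) (cbox (vec_of_pair a) (vec_of_pair b))"
proof -
  have "((\<lambda>x. J (pair_of_vec x)) has_integral (1 / 1) *\<^sub>R I) (vec_of_pair ` cbox a b)"
  proof (rule has_integral_twiddle[where g = pair_of_vec and h = vec_of_pair and r = 1])
    show "continuous (at x) pair_of_vec" for x
      by (simp add: bounded_linear_pair_of_vec linear_continuous_at)
    show "\<exists>w z. pair_of_vec ` cbox u v = cbox w z" for u v
      using pair_of_vec_image_cbox by blast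
    show "\<exists>w z. vec_of_pair ` cbox u v = cbox w z" for u v
      using vec_of_pair_image_cbox by blast
    show "measure lborel (pair_of_vec ` cbox u v) = 1 * measure lborel (cbox u v)" for u v
      by (simp add: pair_of_vec_image_cbox content_pair_of_vec_cbox)
  qed (use assms in auto)
  then show ?thesis by (simp add: vec_of_pair_image_cbox)
qed

lemma measure_vec_of_pair_image:
  fixes A :: "(real \<times> real) set"
  assumes A: "A \<in> lmeasurable" and sub: "A \<subseteq> cbox a b"
  shows "measure lebesgue (vec_of_pair ` A) = measure lebesgue A"
proof -
  have "(indicat_real A has_integral measure lebesgue A) UNIV"
    using A lmeasurable_iff_indicator_has_integral[of A "measure lebesgue A"] by simp
  moreover have "(\<lambda>x. if x \<in> cbox a b then indicat_real A x else 0) = indicat_real A"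
    using sub by (auto simp: fun_eq_iff indicator_def)
  ultimately have "(indicat_real A has_integral measure lebesgue A) (cbox a b)"
    using has_integral_restrict_UNIV[of "cbox a b" "indicat_real A"] by simp
  then have "((\<lambda>x. indicat_real A (pair_of_vec x)) has_integral measure lebesgue A)
      (cbox (vec_of_pair a) (vec_of_pair b))"
    by (rule has_integral_vec_of_pair)
  moreover have "(\<lambda>x. indicat_real A (pair_of_vec x)) = indicat_real (vec_of_pair ` A)"
    by (simp add: fun_eq_iff indicator_def mem_vec_of_pair_image)
  moreover have "vec_of_pair ` A \<subseteq> cbox (vec_of_pair a) (vec_of_pair b)"
    using sub vec_of_pair_image_cbox by blast
  then have "(\<lambda>x. if x \<in> cbox (vec_of_pair a) (vec_of_pair b) then indicat_real (vec_of_pair ` A) x else 0)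
      = indicat_real (vec_of_pair ` A)"
    by (auto simp: fun_eq_iff indicator_def)
  ultimately have "(indicat_real (vec_of_pair ` A) has_integral measure lebesgue A) UNIV"
    using has_integral_restrict_UNIV[of "cbox (vec_of_pair a) (vec_of_pair b)" "indicat_real (vec_of_pair ` A)"]
    by simp
  then show ?thesis
    using lmeasurable_iff_indicator_has_integral[of "vec_of_pair ` A" "measure lebesgue A"] by simp
qed

definition det2 :: "(real \<times> real \<Rightarrow> real \<times> real) \<Rightarrow> real" where
  "det2 L = fst (L (1, 0)) * snd (L (0, 1)) - fst (L (0, 1)) * snd (L (1, 0))"

lemma det_matrix_vec_of_pair: "det (matrix (\<lambda>y. vec_of_pair (L (pair_of_vec y)))) = det2 L"
proof -
  have "pair_of_vec (axis 1 1) = (1, 0)" "pair_of_vec (axis 2 1) = (0, 1)"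
    by (simp_all add: pair_of_vec_def axis_def)
  then show ?thesis
    unfolding det_2 det2_def by (simp add: matrix_def)
qed

lemma measure_image_le_integral_det2:
  fixes f :: "real \<times> real \<Rightarrow> real \<times> real"
  assumes der: "\<And>x. x \<in> cbox a b \<Longrightarrow> (f has_derivative f' x) (at x within cbox a b)"
    and cont_det: "continuous_on (cbox a b) (\<lambda>x. \<bar>det2 (f' x)\<bar>)"
    and cont: "continuous_on (cbox a b) f"
  shows "measure lebesgue (f ` cbox a b) \<le> integral (cbox a b) (\<lambda>x. \<bar>det2 (f' x)\<bar>)"
proof -
  define S where "S = cbox (vec_of_pair a) (vec_of_pair b)"
  define F where "F x = vec_of_pair (f (pair_of_vec x))" for x
  define F' where "F' x y = vec_of_pair (f' (pair_of_vec x) (pair_of_vec y))" for x y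
  have S: "S = vec_of_pair ` cbox a b" and pS: "pair_of_vec ` S = cbox a b"
    unfolding S_def vec_of_pair_image_cbox pair_of_vec_image_cbox by simp_all
  have dF: "(F has_derivative F' x) (at x within S)" if "x \<in> S" for x
  proof -
    have "pair_of_vec x \<in> cbox a b"
      using that pS by blast
    then have "((f \<circ> pair_of_vec) has_derivative (f' (pair_of_vec x) \<circ> pair_of_vec)) (at x within S)"
      using pS der
      by (intro diff_chain_within bounded_linear_imp_has_derivative bounded_linear_pair_of_vec) simp
    then show ?thesis
      unfolding F_def[abs_def] F'_def[abs_def]
      using diff_chain_within[OF _ bounded_linear_imp_has_derivative[OF bounded_linear_vec_of_pair]]
      by (simp add: o_def)
  qed
  have jac: "((\<lambda>x. \<bar>det (matrix (F' x))\<bar>) has_integral integral (cbox a b) (\<lambda>x. \<bar>det2 (f' x)\<bar>)) S"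
    unfolding F'_def det_matrix_vec_of_pair S_def
    using cont_det by (intro has_integral_vec_of_pair integrable_integral integrable_continuous)
  have "measure lebesgue (F ` S) \<le> integral S (\<lambda>x. \<bar>det (matrix (F' x))\<bar>)"
    using dF jac by (intro measure_differentiable_image) (auto simp: S_def)
  then have "measure lebesgue (F ` S) \<le> integral (cbox a b) (\<lambda>x. \<bar>det2 (f' x)\<bar>)"
    using integral_unique[OF jac] by simp
  moreover have "F ` S = vec_of_pair ` (f ` cbox a b)"
    unfolding S F_def by (simp add: image_comp o_def)
  moreover have "compact (f ` cbox a b)"
    using cont by (simp add: compact_continuous_image)
  then obtain c where "f ` cbox a b \<subseteq> cbox (- c) c"
    using bounded_subset_cbox_symmetric compact_imp_bounded by metis
  then have "measure lebesgue (vec_of_pair ` (f ` cbox a b)) = measure lebesgue (f ` cbox a b)"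
    using \<open>compact (f ` cbox a b)\<close> by (intro measure_vec_of_pair_image lmeasurable_compact)
  ultimately show ?thesis by simp
qed

section \<open>Cones over curves\<close>

lemma ray_through_inside_meets:
  fixes S :: "'a::real_normed_vector set"
  assumes p: "p \<in> S" and x: "x \<in> inside S"
  shows "\<exists>l\<ge>1. p + l *\<^sub>R (x - p) \<in> S"
proof (rule ccontr)
  assume miss: "\<not> (\<exists>l\<ge>1. p + l *\<^sub>R (x - p) \<in> S)"
  define R where "R = (\<lambda>l. p + l *\<^sub>R (x - p)) ` {1..}"
  have "connected R"
    unfolding R_def
    by (rule connected_continuous_image) (auto intro!: continuous_intros simp: connected_iff_interval)
  moreover have "x \<in> R"
    unfolding R_def by (rule image_eqI[of _ _ 1]) auto
  moreover have "R \<subseteq> - S"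
    using miss unfolding R_def by auto
  ultimately have "R \<subseteq> connected_component_set (- S) x"
    by (intro connected_component_maximal)
  then have "bounded R"
    using x bounded_subset unfolding inside_def by blast
  then obtain B where B: "\<And>y. y \<in> R \<Longrightarrow> norm y \<le> B"
    unfolding bounded_iff by blast
  have "x \<noteq> p"
    using x p inside_no_overlap[of S] by blast
  then have "norm (x - p) > 0"
    by simp
  then obtain l where l: "l \<ge> 1" "l * norm (x - p) > B + norm p"
    by (metis (no_types) add_pos_pos divide_less_eq max.cobounded1 max.cobounded2 order_less_le_trans
        reals_Archimedean2 zero_less_norm_iff)
  have "l * norm (x - p) - norm p \<le> norm (p + l *\<^sub>R (x - p))"
    using norm_diff_ineq[of "l *\<^sub>R (x - p)" p] l(1) by (simp add: add.commute)
  also have "\<dots> \<le> B"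
    using B[of "p + l *\<^sub>R (x - p)"] l(1) unfolding R_def by auto
  finally show False using l(2) by linarith
qed

lemma inside_subset_cone:
  fixes S :: "'a::real_normed_vector set"
  assumes "p \<in> S"
  shows "inside S \<subseteq> (\<lambda>(t, x). p + t *\<^sub>R (x - p)) ` ({0..1} \<times> S)"
proof
  fix y
  assume "y \<in> inside S"
  then obtain l where l: "l \<ge> 1" "p + l *\<^sub>R (y - p) \<in> S"
    using ray_through_inside_meets[OF assms] by blast
  then have "y = p + (1 / l) *\<^sub>R ((p + l *\<^sub>R (y - p)) - p)"
    by simp
  with l show "y \<in> (\<lambda>(t, x). p + t *\<^sub>R (x - p)) ` ({0..1} \<times> S)"
    by (intro image_eqI[of _ _ "(1 / l, p + l *\<^sub>R (y - p))"]) auto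
qed

lemma measure_inside_le_cone:
  fixes S :: "'a::euclidean_space set"
  assumes "compact S" and "p \<in> S"
  shows "measure lebesgue (inside S) \<le> measure lebesgue ((\<lambda>(t, x). p + t *\<^sub>R (x - p)) ` ({0..1} \<times> S))"
proof (rule measure_mono_fmeasurable[OF inside_subset_cone[OF assms(2)]])
  have cone: "compact ((\<lambda>(t, x). p + t *\<^sub>R (x - p)) ` ({0..1} \<times> S))"
    unfolding split_def using assms(1)
    by (intro compact_continuous_image compact_Times continuous_intros) auto
  then show "(\<lambda>(t, x). p + t *\<^sub>R (x - p)) ` ({0..1} \<times> S) \<in> fmeasurable lebesgue"
    by (rule lmeasurable_compact)
  have "bounded (inside S)"
    using inside_subset_cone[OF assms(2)] cone compact_imp_bounded bounded_subset by blast
  then show "inside S \<in> sets lebesgue"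
    using assms(1) by (simp add: compact_imp_closed open_inside lmeasurable_open fmeasurableD)
qed

lemma measure_cone_le:
  fixes \<gamma> \<gamma>' :: "real \<Rightarrow> real \<times> real"
  assumes der: "\<And>s. (\<gamma> has_vector_derivative \<gamma>' s) (at s)" and cont': "continuous_on UNIV \<gamma>'"
  shows "measure lebesgue ((\<lambda>(t, s). p + t *\<^sub>R (\<gamma> s - p)) ` ({0..1} \<times> {a..b}))
    \<le> integral {a..b} (\<lambda>s. \<bar>fst (\<gamma> s - p) * snd (\<gamma>' s) - snd (\<gamma> s - p) * fst (\<gamma>' s)\<bar>) / 2"
proof -
  define c where "c s = \<bar>fst (\<gamma> s - p) * snd (\<gamma>' s) - snd (\<gamma> s - p) * fst (\<gamma>' s)\<bar>" for s
  define \<Phi> where "\<Phi> z = p + fst z *\<^sub>R (\<gamma> (snd z) - p)" for z :: "real \<times> real"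
  define \<Phi>' where "\<Phi>' z d = fst d *\<^sub>R (\<gamma> (snd z) - p) + fst z *\<^sub>R (snd d *\<^sub>R \<gamma>' (snd z))"
    for z d :: "real \<times> real"
  have cont: "continuous_on UNIV \<gamma>"
    using der has_vector_derivative_continuous continuous_at_imp_continuous_on by blast
  have d\<gamma>: "((\<lambda>z. \<gamma> (snd z)) has_derivative (\<lambda>d. snd d *\<^sub>R \<gamma>' (snd z))) (at z)" for z
    using diff_chain_at[OF has_derivative_snd[OF has_derivative_ident] der[of "snd z", unfolded has_vector_derivative_def]]
    by (simp add: o_def)
  have d\<Phi>: "(\<Phi> has_derivative \<Phi>' z) (at z)" for z
    unfolding \<Phi>_def[abs_def] \<Phi>'_def
    by (auto intro!: derivative_eq_intros d\<gamma> simp: algebra_simps)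
  have cont_\<Phi>: "continuous_on A \<Phi>" for A
    unfolding \<Phi>_def by (intro continuous_intros continuous_on_compose2[OF cont]) auto
  have det: "\<bar>det2 (\<Phi>' z)\<bar> = \<bar>fst z\<bar> * c (snd z)" for z
    by (simp add: det2_def \<Phi>'_def c_def abs_mult[symmetric] algebra_simps)
  have "continuous_on UNIV c"
    unfolding c_def by (intro continuous_intros cont cont')
  then have "continuous_on A (\<lambda>z. c (snd z))" for A
    by (rule continuous_on_compose2) (auto intro: continuous_intros)
  then have cont_det: "continuous_on A (\<lambda>z. \<bar>fst z\<bar> * c (snd z))" for A
    by (intro continuous_intros)
  have "measure lebesgue (\<Phi> ` cbox (0, a) (1, b)) \<le> integral (cbox (0, a) (1, b)) (\<lambda>z. \<bar>det2 (\<Phi>' z)\<bar>)"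
    by (rule measure_image_le_integral_det2[OF has_derivative_at_withinI[OF d\<Phi>]])
       (simp_all only: det cont_det cont_\<Phi>)
  also have "\<dots> = integral {0..1} (\<lambda>t. \<bar>t\<bar> * integral {a..b} c)"
    unfolding det integral_prod_continuous[OF cont_det] by (simp add: cbox_interval)
  also have "\<dots> = integral {0..1} (\<lambda>t. t * integral {a..b} c)"
    by (rule integral_cong) simp
  also have "\<dots> = integral {a..b} c / 2"
    by simp
  also have "\<Phi> ` cbox (0, a) (1, b) = (\<lambda>(t, s). p + t *\<^sub>R (\<gamma> s - p)) ` ({0..1} \<times> {a..b})"
    by (simp add: \<Phi>_def[abs_def] cbox_Pair_eq split_def)
  finally show ?thesis
    unfolding c_def .
qed

section \<open>Ovals\<close>

lemma uvec_has_vector_derivative: "(uvec has_vector_derivative uvec' s) (at s)"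
  and uvec'_has_vector_derivative: "(uvec' has_vector_derivative - uvec s) (at s)"
  unfolding uvec_def[abs_def] uvec'_def[abs_def]
  by (auto intro!: has_vector_derivative_Pair derivative_eq_intros
      simp: has_real_derivative_iff_has_vector_derivative[symmetric])

lemma norm_uvec' [simp]: "norm (uvec' s) = 1"
  by (simp add: uvec'_def norm_Pair)

locale oval =
  fixes h :: "real \<Rightarrow> real"
  assumes oval_support: "oval_support h"
begin

lemma differentiable_support: "h differentiable at s" "deriv h differentiable at s"
  "deriv (deriv h) differentiable at s"
proof -
  have "(deriv ^^ n) h differentiable at s" for n
    using oval_support by (simp add: oval_support_def)
  from this[of 0] this[of 1] this[of 2] show
    "h differentiable at s" "deriv h differentiable at s" "deriv (deriv h) differentiable at s"
    by (simp_all add: numeral_2_eq_2)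
qed

lemma has_real_derivative_support: "(h has_real_derivative deriv h s) (at s)"
  and has_real_derivative_deriv_support: "(deriv h has_real_derivative deriv (deriv h) s) (at s)"
  using differentiable_support by (simp_all add: DERIV_deriv_iff_real_differentiable)

lemma continuous_support [continuous_intros]: "continuous_on UNIV h"
  and continuous_deriv_support [continuous_intros]: "continuous_on UNIV (deriv h)"
  and continuous_deriv2_support [continuous_intros]: "continuous_on UNIV (deriv (deriv h))"
  by (intro continuous_at_imp_continuous_on ballI differentiable_imp_continuous_within
      differentiable_support)+

lemma periodic_support: "periodic h"
  using oval_support by (simp add: oval_support_def periodic_def)

lemma periodic_deriv_support: "periodic (deriv h)"
  by (intro periodic_deriv periodic_support differentiable_support)

lemma radius_of_curvature_pos: "h s + deriv (deriv h) s > 0"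
  using oval_support by (simp add: oval_support_def)

lemma curve_has_vector_derivative:
  "(oval_curve h has_vector_derivative (h s + deriv (deriv h) s) *\<^sub>R uvec' s) (at s)"
proof -
  have "(oval_curve h has_vector_derivative
      (h s *\<^sub>R uvec' s + deriv h s *\<^sub>R uvec s) + (deriv h s *\<^sub>R (- uvec s) + deriv (deriv h) s *\<^sub>R uvec' s)) (at s)"
    unfolding oval_curve_def[abs_def]
    by (intro has_vector_derivative_add has_vector_derivative_scaleR has_real_derivative_support
        has_real_derivative_deriv_support uvec_has_vector_derivative uvec'_has_vector_derivative)
  then show ?thesis by (simp add: algebra_simps)
qed

lemma length_eq: "oval_length h = pi * avg_width h"
proof -
  have "norm (vector_derivative (oval_curve h) (at s)) = h s + deriv (deriv h) s" for s
    using vector_derivative_at[OF curve_has_vector_derivative] radius_of_curvature_pos[of s]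
    by simp
  then have "oval_length h = integral {0..2*pi} h + integral {0..2*pi} (deriv (deriv h))"
    unfolding oval_length_def
    by (simp add: integral_add continuous_on_UNIV_integrable continuous_intros)
  moreover have "integral {0..2*pi} (deriv (deriv h)) = 0"
    using periodic_deriv_support[unfolded periodic_def, rule_format, of 0]
    by (intro integral_deriv_period_eq_0[OF has_real_derivative_deriv_support]) simp
  ultimately show ?thesis by (simp add: avg_width_def)
qed

lemma inner_curve_uvec: "inner (oval_curve h t) (uvec s) = h t * cos (t - s) - deriv h t * sin (t - s)"
  by (simp add: oval_curve_def uvec_def uvec'_def cos_diff sin_diff algebra_simps)

text \<open>\<open>t \<mapsto> \<langle>\<O>(t), u(s)\<rangle>\<close> has derivative \<open>-(h + h'') (t) sin (t - s)\<close>, so it increases up to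
  \<open>t = s\<close> and decreases after, within distance \<open>\<pi>\<close>.\<close>

lemma inner_curve_le_support_near:
  assumes "\<bar>t - s\<bar> \<le> pi"
  shows "inner (oval_curve h t) (uvec s) \<le> h s"
proof -
  define \<phi> where "\<phi> t = inner (oval_curve h t) (uvec s)" for t
  have d\<phi>: "(\<phi> has_real_derivative - (h x + deriv (deriv h) x) * sin (x - s)) (at x)" for x
    unfolding \<phi>_def inner_curve_uvec
    by (auto intro!: derivative_eq_intros has_real_derivative_support has_real_derivative_deriv_support
        simp: algebra_simps)
  have cont: "continuous_on A \<phi>" for A
    using d\<phi> DERIV_isCont continuous_at_imp_continuous_on by blast
  have "\<phi> t \<le> \<phi> s"
  proof (cases "t \<le> s")
    case True
    show ?thesis
    proof (rule DERIV_nonneg_imp_increasing_open[OF True _ cont])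
      fix x
      assume "t < x" "x < s"
      then have "sin (s - x) \<ge> 0" using assms by (intro sin_ge_zero) auto
      then have "(h x + deriv (deriv h) x) * sin (s - x) \<ge> 0"
        using radius_of_curvature_pos[of x] by simp
      moreover have "sin (x - s) = - sin (s - x)"
        by (metis minus_diff_eq sin_minus)
      ultimately have "- (h x + deriv (deriv h) x) * sin (x - s) \<ge> 0"
        by (simp only: mult_minus_right mult_minus_left minus_minus)
      then show "\<exists>y. (\<phi> has_real_derivative y) (at x) \<and> y \<ge> 0" using d\<phi> by blast
    qed
  next
    case False
    show ?thesis
    proof (rule DERIV_nonpos_imp_decreasing_open[of s t, OF _ _ cont])
      fix x
      assume "s < x" "x < t"
      then have "sin (x - s) \<ge> 0" using assms False by (intro sin_ge_zero) auto
      then have "(h x + deriv (deriv h) x) * sin (x - s) \<ge> 0"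
        using radius_of_curvature_pos[of x] by simp
      then have "- (h x + deriv (deriv h) x) * sin (x - s) \<le> 0"
        by (simp only: mult_minus_left neg_le_0_iff_le)
      then show "\<exists>y. (\<phi> has_real_derivative y) (at x) \<and> y \<le> 0" using d\<phi> by blast
    qed (use False in simp)
  qed
  then show ?thesis by (simp add: \<phi>_def inner_curve_uvec)
qed

lemma inner_curve_le_support: "inner (oval_curve h t) (uvec s) \<le> h s"
proof -
  define m where "m = round ((s - t) / (2*pi))"
  define t' where "t' = t + 2 * pi * of_int m"
  have "\<bar>(s - t) / (2*pi) - of_int m\<bar> \<le> 1/2"
    unfolding m_def using of_int_round_abs_le[of "(s - t) / (2*pi)"] by (simp add: abs_minus_commute)
  then have "\<bar>t' - s\<bar> \<le> pi"
    unfolding t'_def by (simp add: abs_le_iff field_simps)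
  moreover have "periodic (oval_curve h)"
    using periodic_support periodic_deriv_support
    by (simp add: periodic_def oval_curve_def uvec_def uvec'_def)
  ultimately show ?thesis
    using inner_curve_le_support_near[of t' s] periodic_add_int_multiple[of "oval_curve h" t m]
    by (simp add: t'_def)
qed

lemma l2_inner_deriv2_support: "l2_inner (deriv (deriv h)) h = - l2_inner (deriv h) (deriv h)"
proof -
  have "integral {0..2*pi} (\<lambda>s. deriv (deriv h) s * h s + deriv h s * deriv h s) = 0"
    using periodic_support[unfolded periodic_def, rule_format, of 0]
      periodic_deriv_support[unfolded periodic_def, rule_format, of 0]
    by (intro integral_deriv_period_eq_0[where F = "\<lambda>s. deriv h s * h s"])
       (auto intro!: derivative_eq_intros has_real_derivative_support has_real_derivative_deriv_support)
  then show ?thesis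
    by (simp add: l2_inner_def integral_add continuous_on_UNIV_integrable continuous_intros)
qed

lemma fourier_radius_of_curvature_1:
  "fourier_cos (\<lambda>s. h s + deriv (deriv h) s) 1 = 0"
  "fourier_sin (\<lambda>s. h s + deriv (deriv h) s) 1 = 0"
  using fourier_cos_deriv[OF periodic_support has_real_derivative_support continuous_deriv_support, of 1]
    fourier_sin_deriv[OF periodic_support has_real_derivative_support continuous_deriv_support, of 1]
    fourier_cos_deriv[OF periodic_deriv_support has_real_derivative_deriv_support continuous_deriv2_support, of 1]
    fourier_sin_deriv[OF periodic_deriv_support has_real_derivative_deriv_support continuous_deriv2_support, of 1]
  by (simp_all add: fourier_cos_def fourier_sin_def l2_inner_add_left continuous_intros)

lemma integral_radius_support_gap:
  "integral {0..2*pi} (\<lambda>s. (h s + deriv (deriv h) s) * (h s - inner p (uvec s)))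
    = l2_inner h h - l2_inner (deriv h) (deriv h)"
proof -
  define \<rho> where "\<rho> = (\<lambda>s. h s + deriv (deriv h) s)"
  have "(\<lambda>s. \<rho> s * (h s - inner p (uvec s))) =
      (\<lambda>s. \<rho> s * h s - (fst p * (\<rho> s * cos_mode 1 s) + snd p * (\<rho> s * sin_mode 1 s)))"
    by (simp add: fun_eq_iff uvec_def inner_prod_def cos_mode_def sin_mode_def algebra_simps)
  then have "integral {0..2*pi} (\<lambda>s. \<rho> s * (h s - inner p (uvec s)))
      = l2_inner \<rho> h - (fst p * fourier_cos \<rho> 1 + snd p * fourier_sin \<rho> 1)"
    by (simp add: l2_inner_def fourier_cos_def fourier_sin_def \<rho>_def integral_diff integral_add
        continuous_on_UNIV_integrable continuous_intros)
  then show ?thesis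
    using fourier_radius_of_curvature_1 l2_inner_deriv2_support
    by (simp add: \<rho>_def l2_inner_add_left continuous_intros)
qed

lemma cross_curve_deriv:
  "fst (oval_curve h s - p) * snd ((h s + deriv (deriv h) s) *\<^sub>R uvec' s)
     - snd (oval_curve h s - p) * fst ((h s + deriv (deriv h) s) *\<^sub>R uvec' s)
   = (h s + deriv (deriv h) s) * (h s - inner p (uvec s))"
proof -
  have "fst (oval_curve h s - p) * snd ((h s + deriv (deriv h) s) *\<^sub>R uvec' s)
      - snd (oval_curve h s - p) * fst ((h s + deriv (deriv h) s) *\<^sub>R uvec' s)
      = (h s + deriv (deriv h) s) * (inner (oval_curve h s) (uvec s) - inner p (uvec s))"
    by (simp add: uvec_def uvec'_def inner_prod_def algebra_simps)
  then show ?thesis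
    by (simp add: inner_curve_uvec)
qed

lemma area_le: "oval_area h \<le> (l2_inner h h - l2_inner (deriv h) (deriv h)) / 2"
proof -
  define p where "p = oval_curve h 0"
  have cont: "continuous_on UNIV (oval_curve h)"
    using curve_has_vector_derivative has_vector_derivative_continuous continuous_at_imp_continuous_on
    by blast
  then have "oval_area h \<le> measure lebesgue
      ((\<lambda>(t, x). p + t *\<^sub>R (x - p)) ` ({0..1} \<times> oval_curve h ` {0..2*pi}))"
    unfolding oval_area_def p_def
    by (intro measure_inside_le_cone compact_continuous_image) (auto intro: continuous_on_subset)
  also have "(\<lambda>(t, x). p + t *\<^sub>R (x - p)) ` ({0..1} \<times> oval_curve h ` {0..2*pi})
      = (\<lambda>(t, s). p + t *\<^sub>R (oval_curve h s - p)) ` ({0..1} \<times> {0..2*pi})"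
    by (auto simp: image_iff) (metis atLeastAtMost_iff)+
  also have "measure lebesgue \<dots> \<le>
      integral {0..2*pi} (\<lambda>s. (h s + deriv (deriv h) s) * (h s - inner p (uvec s))) / 2"
  proof -
    have "inner p (uvec s) \<le> h s" for s
      unfolding p_def by (rule inner_curve_le_support)
    then have "(h s + deriv (deriv h) s) * (h s - inner p (uvec s)) \<ge> 0" for s
      using radius_of_curvature_pos[of s] by simp
    moreover have "continuous_on UNIV (\<lambda>s. (h s + deriv (deriv h) s) *\<^sub>R uvec' s)"
      unfolding uvec'_def by (intro continuous_intros)
    ultimately show ?thesis
      using measure_cone_le[OF curve_has_vector_derivative, of p 0 "2*pi", unfolded cross_curve_deriv]
      by simp
  qed
  finally show ?thesis
    unfolding integral_radius_support_gap .
qed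

lemma has_real_derivative_ops_support: "(ops_support k h has_real_derivative rot_avg k (deriv h) s) (at s)"
  unfolding ops_support_eq
  by (auto intro!: derivative_eq_intros has_real_derivative_rot_avg has_real_derivative_support)

lemma ops_area_eq:
  "ops_area k h = (l2_inner (ops_support k h) (ops_support k h)
     - l2_inner (rot_avg k (deriv h)) (rot_avg k (deriv h))) / 2"
proof -
  have "deriv (ops_support k h) = rot_avg k (deriv h)"
    using has_real_derivative_ops_support DERIV_imp_deriv by blast
  then show ?thesis
    by (simp add: ops_area_def l2_inner_def ops_support_eq power2_eq_square integral_diff
        continuous_on_UNIV_integrable continuous_intros)
qed

lemma fourier_ops_support:
  assumes "k \<ge> 2"
  shows "fourier_cos (ops_support k h) 0 = 0"
    and "fourier_cos (ops_support k h) 1 = 0"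
    and "fourier_sin (ops_support k h) 1 = 0"
proof -
  have "ops_support k h = (\<lambda>s. rot_avg k h s - avg_width h / 2 * cos_mode 0 s)"
    by (simp add: ops_support_eq cos_mode_def)
  then have "fourier_cos (ops_support k h) n = fourier_cos (rot_avg k h) n - avg_width h / 2 * l2_inner (cos_mode 0) (cos_mode n)"
    "fourier_sin (ops_support k h) n = fourier_sin (rot_avg k h) n - avg_width h / 2 * l2_inner (cos_mode 0) (sin_mode n)"
    for n
    by (simp_all add: fourier_cos_def fourier_sin_def l2_inner_diff_left l2_inner_divide_left
        l2_inner_scale_left continuous_intros)
  moreover have "fourier_cos (rot_avg k h) 0 = fourier_cos h 0"
    using assms by (simp add: fourier_cos_def l2_inner_def cos_mode_def integral_rot_avg periodic_support
        continuous_intros)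
  ultimately show "fourier_cos (ops_support k h) 0 = 0" "fourier_cos (ops_support k h) 1 = 0"
      "fourier_sin (ops_support k h) 1 = 0"
    using fourier_cos_rot_avg_1[OF periodic_support continuous_support assms]
      fourier_sin_rot_avg_1[OF periodic_support continuous_support assms]
    by (simp_all add: l2_inner_cos_mode_cos_mode l2_inner_cos_mode_sin_mode
        fourier_low_modes[of h] del: One_nat_def)
qed

lemma wirtinger_ops_support:
  assumes "k \<ge> 2"
  shows "4 * l2_inner (ops_support k h) (ops_support k h) \<le> l2_inner (rot_avg k (deriv h)) (rot_avg k (deriv h))"
proof (rule wirtinger_inequality[OF _ has_real_derivative_ops_support])
  show "periodic (ops_support k h)"
    using periodic_rot_avg[OF periodic_support] by (simp add: ops_support_eq periodic_def)
qed (use fourier_ops_support[OF assms] in \<open>simp_all add: continuous_intros\<close>)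

lemma l2_inner_support_split:
  assumes k: "k \<ge> 2"
  defines "D \<equiv> steiner_disk_support h" and "q \<equiv> ops_support k h"
  shows "l2_inner h h = l2_inner D D + l2_inner q q + l2_inner (\<lambda>s. h s - D s - q s) (\<lambda>s. h s - D s - q s)"
proof (rule l2_inner_pythagoras)
  show "l2_inner D h = l2_inner D D"
    by (simp add: D_def l2_inner_steiner_disk_support fourier_steiner_disk_support
        fourier_low_modes[of h] continuous_intros del: One_nat_def)
  show "l2_inner D q = 0"
    using fourier_ops_support[OF k]
    by (simp add: D_def q_def l2_inner_steiner_disk_support ops_support_eq continuous_intros del: One_nat_def)
  have "l2_inner (rot_avg k h) h = l2_inner (rot_avg k h) (rot_avg k h)"
    using l2_inner_rot_avg_self[OF periodic_support continuous_support, of k] k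
    by (simp add: l2_inner_commute)
  moreover have "integral {0..2*pi} (rot_avg k h) = pi * avg_width h"
    using k by (simp add: integral_rot_avg periodic_support continuous_intros avg_width_def)
  ultimately show "l2_inner q h = l2_inner q q"
    by (simp add: q_def ops_support_eq l2_inner_diff_left l2_inner_diff_right l2_inner_const_left
        l2_inner_commute[of _ "\<lambda>s. _"] integral_diff continuous_on_UNIV_integrable continuous_intros
        avg_width_def power2_eq_square algebra_simps)
qed (simp_all add: D_def q_def ops_support_eq continuous_intros)

lemma l2_inner_deriv_support_split:
  assumes k: "k \<ge> 2"
  defines "D' \<equiv> steiner_disk_deriv h" and "q' \<equiv> rot_avg k (deriv h)"
  shows "l2_inner (deriv h) (deriv h) = l2_inner D' D' + l2_inner q' q'
    + l2_inner (\<lambda>s. deriv h s - D' s - q' s) (\<lambda>s. deriv h s - D' s - q' s)"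
proof (rule l2_inner_pythagoras)
  show "l2_inner D' (deriv h) = l2_inner D' D'"
    using fourier_cos_deriv[OF periodic_support has_real_derivative_support continuous_deriv_support, of 1]
      fourier_sin_deriv[OF periodic_support has_real_derivative_support continuous_deriv_support, of 1]
    by (simp add: D'_def l2_inner_steiner_disk_deriv fourier_steiner_disk_deriv
        fourier_low_modes[of h] continuous_intros del: One_nat_def)
  show "l2_inner D' q' = 0"
    using fourier_cos_rot_avg_1[OF periodic_deriv_support continuous_deriv_support k]
      fourier_sin_rot_avg_1[OF periodic_deriv_support continuous_deriv_support k]
    by (simp add: D'_def q'_def l2_inner_steiner_disk_deriv continuous_intros del: One_nat_def)
  show "l2_inner q' (deriv h) = l2_inner q' q'"
    using l2_inner_rot_avg_self[OF periodic_deriv_support continuous_deriv_support, of k] k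
    by (simp add: q'_def l2_inner_commute)
qed (simp_all add: D'_def q'_def continuous_intros)

lemma wirtinger_residual:
  assumes k: "k \<ge> 2"
  defines "g \<equiv> \<lambda>s. h s - steiner_disk_support h s - ops_support k h s"
    and "g' \<equiv> \<lambda>s. deriv h s - steiner_disk_deriv h s - rot_avg k (deriv h) s"
  shows "4 * l2_inner g g \<le> l2_inner g' g'"
proof (rule wirtinger_inequality)
  show "periodic g"
    using periodic_support periodic_steiner_disk_support periodic_rot_avg[OF periodic_support]
    by (simp add: g_def ops_support_eq periodic_def)
  show "(g has_real_derivative g' s) (at s)" for s
    unfolding g_def g'_def
    by (intro derivative_intros has_real_derivative_support has_real_derivative_steiner_disk_support
        has_real_derivative_ops_support)
  have "fourier_cos g n = fourier_cos h n - fourier_cos (steiner_disk_support h) n - fourier_cos (ops_support k h) n"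
    "fourier_sin g n = fourier_sin h n - fourier_sin (steiner_disk_support h) n - fourier_sin (ops_support k h) n"
    for n
    by (simp_all add: g_def fourier_cos_def fourier_sin_def l2_inner_diff_left ops_support_eq continuous_intros)
  then show "fourier_cos g 0 = 0" "fourier_cos g 1 = 0" "fourier_sin g 1 = 0"
    using fourier_ops_support[OF k]
    by (simp_all add: fourier_steiner_disk_support fourier_low_modes[of h] del: One_nat_def)
qed (simp add: g'_def continuous_intros)

lemma abs_ops_area_eq:
  assumes "k \<ge> 2"
  shows "\<bar>ops_area k h\<bar> = (l2_inner (rot_avg k (deriv h)) (rot_avg k (deriv h))
    - l2_inner (ops_support k h) (ops_support k h)) / 2"
  using ops_area_eq[of k] wirtinger_ops_support[OF assms] l2_inner_self_nonneg[of "ops_support k h"]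
  by (simp add: ops_support_eq continuous_intros)

lemma l2_inner_support_diff_split:
  assumes k: "k \<ge> 2"
  defines "g \<equiv> \<lambda>s. h s - steiner_disk_support h s - ops_support k h s"
    and "g' \<equiv> \<lambda>s. deriv h s - steiner_disk_deriv h s - rot_avg k (deriv h) s"
  shows "l2_inner h h - l2_inner (deriv h) (deriv h) = pi * (avg_width h)\<^sup>2 / 2
    + (l2_inner (ops_support k h) (ops_support k h) - l2_inner (rot_avg k (deriv h)) (rot_avg k (deriv h)))
    + (l2_inner g g - l2_inner g' g')"
  using l2_inner_support_split[OF k] l2_inner_deriv_support_split[OF k]
    l2_inner_steiner_disk_support_self_diff[of h]
  unfolding g_def g'_def by linarith

end

theorem theorem5p7:
  fixes k :: nat and h :: "real \<Rightarrow> real"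
  assumes "k > 2"
    and "oval_support h"
  shows "(oval_length h)\<^sup>2 - 4 * pi * oval_area h - 4 * pi * \<bar>ops_area k h\<bar>
           \<ge> 6 * pi * (d2 h (\<lambda>s. ops_support k h s + steiner_disk_support h s))\<^sup>2"
proof -
  interpret oval h
    using assms(2) by unfold_locales
  have k: "k \<ge> 2"
    using assms(1) by simp
  define g where "g = (\<lambda>s. h s - steiner_disk_support h s - ops_support k h s)"
  define g' where "g' = (\<lambda>s. deriv h s - steiner_disk_deriv h s - rot_avg k (deriv h) s)"
  define q where "q = ops_support k h"
  define q' where "q' = rot_avg k (deriv h)"
  have "6 * pi * l2_inner g g \<le> 2 * pi * (l2_inner g' g' - l2_inner g g)"
    using wirtinger_residual[OF k] by (simp add: g_def g'_def)
  also have "\<dots> = (pi * avg_width h)\<^sup>2 - 2 * pi * (l2_inner h h - l2_inner (deriv h) (deriv h))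
      - 2 * pi * (l2_inner q' q' - l2_inner q q)"
    by (simp add: l2_inner_support_diff_split[OF k] g_def g'_def q_def q'_def power2_eq_square algebra_simps)
  also have "\<dots> \<le> (oval_length h)\<^sup>2 - 4 * pi * oval_area h - 4 * pi * \<bar>ops_area k h\<bar>"
  proof -
    have "4 * pi * oval_area h \<le> 2 * pi * (l2_inner h h - l2_inner (deriv h) (deriv h))"
      using area_le by simp
    moreover have "4 * pi * \<bar>ops_area k h\<bar> = 2 * pi * (l2_inner q' q' - l2_inner q q)"
      using abs_ops_area_eq[OF k] by (simp add: q_def q'_def)
    ultimately show ?thesis
      unfolding length_eq by linarith
  qed
  also have "l2_inner g g = (d2 h (\<lambda>s. ops_support k h s + steiner_disk_support h s))\<^sup>2"
    unfolding g_def by (subst d2_square_eq) (simp_all add: ops_support_eq continuous_intros algebra_simps)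
  finally show ?thesis .
qed

end
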